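(* Let $A,B\in\mathcal A_n$. The following are equivalent: (1) $A\le B$ in ASM order; (2) the Laurent polynomial $\mathbf x^A-\mathbf x^B$ is $q$TNN; (3) $\mathbf x^A-\mathbf x^B$ has the $q$SFL property.
   Context: $\mathcal A_n$ is the set of $n\times n$ alternating sign matrices (entries in $\{-1,0,1\}$, partial row and column sums in $\{0,1\}$, full row and column sums $1$). Corner sum matrix $\widetilde A(i,j)=\sum_{p\le i,q\le j}a_{pq}$. ASM order: $A\le B$ iff $\widetilde A(i,j)\ge\widetilde B(i,j)$ for all $i,j\in[n]$. Let $x=(x_{ij})_{i,j=1}^n$ be a matrix of commuting indeterminates; for $A\in\mathcal A_n$, $\mathbf x^A=\prod_{i,j}x_{ij}^{a_{ij}}$. For a real $n\times n$ matrix $M=(m_{ij})$ and real $q>0$, $M_q=(q^{(i-j)^2/2}m_{ij})$; similarly $x_q=(x_{ij,q})$ with $x_{ij,q}=q^{(i-j)^2/2}x_{ij}$, and for a rational function $g$, $g(x_q)$ (resp. $g(M_q)$) means $g$ evaluated at these entries. A real matrix $M$ is locally TNN at $q_0>0$ if all minors (determinants of square submatrices) of $M_{q_0}$ are nonnegative. A rational function $g(x)$ is locally TNN at $q_0$ if $g(M_{q_0})\ge0$ for every real $n\times n$ matrix $M$ that is locally TNN at $q_0$ and for which $g(M_{q_0})$ is defined; $g$ is $q$TNN if it is locally TNN at every $q_0>0$. Let $\Delta_1(x),\dots,\Delta_m(x)$ be all minors of $x$. $g$ has the $q$SFL property if there are polynomials $F,G\in\mathbb R[x]$ with: $g=F/G$;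 $F=\sum c_{i_1\cdots i_k}\Delta_{i_1}(x)\cdots\Delta_{i_k}(x)$ with nonnegative integer coefficients $c$; $G=\prod_j\Delta_j(x)^{d_j}$ with nonnegative integers $d_j$; and $g(x_q)=F(x_q)/G(x_q)$ is a polynomial in $q$ (with coefficients rational functions in the $x_{ij}$). *)

theory Defs
  imports Complex_Main "Jordan_Normal_Form.Determinant"
begin

text \<open>n x n matrices are functions nat => nat => _, indices range over {1..n}.\<close>

definition is_ASM :: "nat \<Rightarrow> (nat \<Rightarrow> nat \<Rightarrow> int) \<Rightarrow> bool" where
  "is_ASM n A \<longleftrightarrow>
     (\<forall>i\<in>{1..n}. \<forall>j\<in>{1..n}. A i j \<in> {-1, 0, 1}) \<and>
     (\<forall>i\<in>{1..n}. \<forall>j\<in>{1..n}. (\<Sum>q=1..j. A i q) \<in> {0, 1}) \<and>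
     (\<forall>i\<in>{1..n}. \<forall>j\<in>{1..n}. (\<Sum>p=1..i. A p j) \<in> {0, 1}) \<and>
     (\<forall>i\<in>{1..n}. (\<Sum>q=1..n. A i q) = 1) \<and>
     (\<forall>j\<in>{1..n}. (\<Sum>p=1..n. A p j) = 1)"

definition corner_sum :: "(nat \<Rightarrow> nat \<Rightarrow> int) \<Rightarrow> nat \<Rightarrow> nat \<Rightarrow> int" where
  "corner_sum A i j = (\<Sum>p=1..i. \<Sum>q=1..j. A p q)"

definition asm_le :: "nat \<Rightarrow> (nat \<Rightarrow> nat \<Rightarrow> int) \<Rightarrow> (nat \<Rightarrow> nat \<Rightarrow> int) \<Rightarrow> bool" where
  "asm_le n A B \<longleftrightarrow> (\<forall>i\<in>{1..n}. \<forall>j\<in>{1..n}. corner_sum A i j \<ge> corner_sum B i j)"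

definition qmat :: "real \<Rightarrow> (nat \<Rightarrow> nat \<Rightarrow> real) \<Rightarrow> (nat \<Rightarrow> nat \<Rightarrow> real)" where
  "qmat q M = (\<lambda>i j. q powr (real_of_int ((int i - int j)^2) / 2) * M i j)"

definition minor_idx :: "nat \<Rightarrow> nat list \<times> nat list \<Rightarrow> bool" where
  "minor_idx n rc \<longleftrightarrow> (case rc of (rs, cs) \<Rightarrow>
     sorted_wrt (<) rs \<and> sorted_wrt (<) cs \<and> length rs = length cs \<and> length rs \<ge> 1 \<and>
     set rs \<subseteq> {1..n} \<and> set cs \<subseteq> {1..n})"

definition minor :: "(nat \<Rightarrow> nat \<Rightarrow> real) \<Rightarrow> nat list \<times> nat list \<Rightarrow> real" where
  "minor M rc = (case rc of (rs, cs) \<Rightarrow>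
     det (mat (length rs) (length rs) (\<lambda>(a, b). M (rs ! a) (cs ! b))))"

definition TNN :: "nat \<Rightarrow> (nat \<Rightarrow> nat \<Rightarrow> real) \<Rightarrow> bool" where
  "TNN n M \<longleftrightarrow> (\<forall>rc. minor_idx n rc \<longrightarrow> minor M rc \<ge> 0)"

definition locally_TNN_mat :: "nat \<Rightarrow> real \<Rightarrow> (nat \<Rightarrow> nat \<Rightarrow> real) \<Rightarrow> bool" where
  "locally_TNN_mat n q0 M \<longleftrightarrow> TNN n (qmat q0 M)"

text \<open>A rational function is given by its evaluation g together with its domain of definition D.\<close>
definition locally_TNN_fun :: "nat \<Rightarrow> real \<Rightarrow> ((nat \<Rightarrow> nat \<Rightarrow> real) \<Rightarrow> bool)
    \<Rightarrow> ((nat \<Rightarrow> nat \<Rightarrow> real) \<Rightarrow> real) \<Rightarrow> bool" where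
  "locally_TNN_fun n q0 D g \<longleftrightarrow>
     (\<forall>M. locally_TNN_mat n q0 M \<and> D (qmat q0 M) \<longrightarrow> g (qmat q0 M) \<ge> 0)"

definition qTNN :: "nat \<Rightarrow> ((nat \<Rightarrow> nat \<Rightarrow> real) \<Rightarrow> bool)
    \<Rightarrow> ((nat \<Rightarrow> nat \<Rightarrow> real) \<Rightarrow> real) \<Rightarrow> bool" where
  "qTNN n D g \<longleftrightarrow> (\<forall>q0>0. locally_TNN_fun n q0 D g)"

definition xmono :: "nat \<Rightarrow> (nat \<Rightarrow> nat \<Rightarrow> int) \<Rightarrow> (nat \<Rightarrow> nat \<Rightarrow> real) \<Rightarrow> real" where
  "xmono n A M = (\<Prod>i\<in>{1..n}. \<Prod>j\<in>{1..n}. M i j powi A i j)"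

definition xmono_dom :: "nat \<Rightarrow> (nat \<Rightarrow> nat \<Rightarrow> int) \<Rightarrow> (nat \<Rightarrow> nat \<Rightarrow> real) \<Rightarrow> bool" where
  "xmono_dom n A M \<longleftrightarrow> (\<forall>i\<in>{1..n}. \<forall>j\<in>{1..n}. A i j < 0 \<longrightarrow> M i j \<noteq> 0)"

definition poly_fun :: "nat \<Rightarrow> ((nat \<Rightarrow> nat \<Rightarrow> real) \<Rightarrow> real) \<Rightarrow> bool" where
  "poly_fun n f \<longleftrightarrow> (\<exists>S c. finite S \<and>
     (\<forall>M. f M = (\<Sum>e\<in>S. c e * (\<Prod>i\<in>{1..n}. \<Prod>j\<in>{1..n}. M i j ^ (e i j :: nat)))))"

text \<open>F = sum of products of minors with nonnegative integer coefficients (list of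
  (coefficient, list of minors)); G = product of powers of minors (list of (minor, exponent)).\<close>
definition eval_F :: "(nat \<times> (nat list \<times> nat list) list) list \<Rightarrow> (nat \<Rightarrow> nat \<Rightarrow> real) \<Rightarrow> real" where
  "eval_F Fs M = (\<Sum>(c, ms) \<leftarrow> Fs. real c * (\<Prod>rc \<leftarrow> ms. minor M rc))"

definition eval_G :: "((nat list \<times> nat list) \<times> nat) list \<Rightarrow> (nat \<Rightarrow> nat \<Rightarrow> real) \<Rightarrow> real" where
  "eval_G Gs M = (\<Prod>(rc, d) \<leftarrow> Gs. minor M rc ^ d)"

definition qSFL :: "nat \<Rightarrow> ((nat \<Rightarrow> nat \<Rightarrow> real) \<Rightarrow> bool)
    \<Rightarrow> ((nat \<Rightarrow> nat \<Rightarrow> real) \<Rightarrow> real) \<Rightarrow> bool" where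
  "qSFL n D g \<longleftrightarrow> (\<exists>Fs Gs.
     (\<forall>(c, ms) \<in> set Fs. \<forall>rc \<in> set ms. minor_idx n rc) \<and>
     (\<forall>(rc, d) \<in> set Gs. minor_idx n rc) \<and>
     \<comment> \<open>g = F / G as rational functions\<close>
     (\<forall>M. D M \<longrightarrow> g M * eval_G Gs M = eval_F Fs M) \<and>
     \<comment> \<open>F(x_q)/G(x_q) is a polynomial in q with coefficients rational functions P_k/Q_k in x\<close>
     (\<exists>N P Q. (\<forall>k\<le>N. poly_fun n (P k) \<and> poly_fun n (Q k) \<and> (\<exists>M. Q k M \<noteq> 0)) \<and>
        (\<forall>q>0. \<forall>M. eval_G Gs (qmat q M) \<noteq> 0 \<and> (\<forall>k\<le>N. Q k M \<noteq> 0) \<longrightarrow>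
           eval_F Fs (qmat q M) / eval_G Gs (qmat q M) = (\<Sum>k\<le>N. P k M / Q k M * q ^ k))))"

end

theory Submission
  imports Defs
begin

(*
  Write d(i,j) = corner_sum A i j - corner_sum B i j, a(i,j) = x(i,j) x(i+1,j+1) and
  b(i,j) = x(i,j+1) x(i+1,j).  Inclusion-exclusion on corner sums gives
  A - B = sum d(i,j) (E(i,j) + E(i+1,j+1) - E(i,j+1) - E(i+1,j)), i.e. the exchange identity
    x^A * prod b(i,j)^d(i,j) = x^B * prod a(i,j)^d(i,j).
  If A <= B then all d(i,j) >= 0, so x^A - x^B = x^B (prod a^d - prod b^d) / prod b^d, and
  prod a^d - prod b^d telescopes into a sum of products of entries and adjacent 2 x 2 minors; this
  is the subtraction-free representation.  On x_q every b(i,j) is q times a(i,j), so the exchange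
  identity for the pair (identity, A) gives x^A(x_q) = q^k x^A(x) with k >= 0, and F(x_q)/G(x_q) is a
  polynomial in q.  The exchange identity also gives x^A >= x^B on matrices with positive entries
  and nonnegative 2 x 2 minors, and every totally nonnegative matrix M is a limit of such matrices,
  namely K M K with K = (e^|i-j|) and e -> 0.  Conversely, if d(i0,j0) < 0 for some (i0,j0), a
  Cauchy matrix 1/(x_i + y_j) whose leading i0 x j0 block is of order 1/t is totally positive and
  has x^A < x^B for small t, so neither q-total nonnegativity nor a subtraction-free
  representation holds.
*)

section \<open>Corner sums of alternating sign matrices\<close>

lemma corner_sum_0_left [simp]: "corner_sum A 0 j = 0"
  and corner_sum_0_right [simp]: "corner_sum A i 0 = 0"
  by (simp_all add: corner_sum_def)

lemma corner_sum_inclusion_exclusion: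
  assumes "1 \<le> p" "1 \<le> q"
  shows "A p q = corner_sum A p q - corner_sum A (p - 1) q - corner_sum A p (q - 1)
                 + corner_sum A (p - 1) (q - 1)"
proof -
  obtain p' q' where "p = Suc p'" "q = Suc q'"
    using assms by (metis Suc_pred' less_eq_Suc_le One_nat_def)
  then show ?thesis
    by (simp add: corner_sum_def sum.distrib)
qed

lemma asm_corner_sum_last_row:
  assumes "is_ASM n A" "j \<le> n"
  shows "corner_sum A n j = int j"
proof -
  have "corner_sum A n j = (\<Sum>q=1..j. \<Sum>p=1..n. A p q)"
    unfolding corner_sum_def by (rule sum.swap)
  also have "\<dots> = (\<Sum>q=1..j. 1)"
    using assms by (intro sum.cong) (auto simp: is_ASM_def)
  finally show ?thesis by simp
qed

lemma asm_corner_sum_last_col: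
  assumes "is_ASM n A" "i \<le> n"
  shows "corner_sum A i n = int i"
proof -
  have "corner_sum A i n = (\<Sum>p=1..i. 1)"
    unfolding corner_sum_def using assms by (intro sum.cong) (auto simp: is_ASM_def)
  then show ?thesis by simp
qed

lemma asm_row_partial_sum_le_1:
  assumes "is_ASM n A" "p \<in> {1..n}" "j \<le> n"
  shows "(\<Sum>q=1..j. A p q) \<le> 1"
proof (cases "j = 0")
  case False
  then have "(\<Sum>q=1..j. A p q) \<in> {0, 1}"
    using assms unfolding is_ASM_def by simp
  then show ?thesis by auto
qed simp

lemma asm_col_partial_sum_le_1:
  assumes "is_ASM n A" "q \<in> {1..n}" "i \<le> n"
  shows "(\<Sum>p=1..i. A p q) \<le> 1"
proof (cases "i = 0")
  case False
  then have "(\<Sum>p=1..i. A p q) \<in> {0, 1}"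
    using assms unfolding is_ASM_def by simp
  then show ?thesis by auto
qed simp

lemma asm_corner_sum_le_min:
  assumes "is_ASM n A" "i \<le> n" "j \<le> n"
  shows "corner_sum A i j \<le> int (min i j)"
proof -
  have "corner_sum A i j \<le> (\<Sum>p=1..i. 1)"
    unfolding corner_sum_def using assms by (intro sum_mono asm_row_partial_sum_le_1) auto
  then have row: "corner_sum A i j \<le> int i" by simp
  have "corner_sum A i j = (\<Sum>q=1..j. \<Sum>p=1..i. A p q)"
    unfolding corner_sum_def by (rule sum.swap)
  also have "\<dots> \<le> (\<Sum>q=1..j. 1)"
    using assms by (intro sum_mono asm_col_partial_sum_le_1) auto
  finally have col: "corner_sum A i j \<le> int j" by simp
  from row col show ?thesis by (simp add: min_def)
qed

lemma asm_row_has_one: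
  assumes A: "is_ASM n A" and i: "i \<in> {1..n}"
  shows "\<exists>j\<in>{1..n}. A i j = 1"
proof (rule ccontr)
  assume "\<not> ?thesis"
  then have "\<forall>j\<in>{1..n}. A i j \<le> 0"
    using A i unfolding is_ASM_def by fastforce
  then have "(\<Sum>j=1..n. A i j) \<le> 0"
    by (intro sum_nonpos) auto
  moreover have "(\<Sum>j=1..n. A i j) = 1"
    using A i unfolding is_ASM_def by auto
  ultimately show False by simp
qed

definition id_asm :: "nat \<Rightarrow> nat \<Rightarrow> int" where
  "id_asm p q = (if p = q then 1 else 0)"

lemma is_ASM_id_asm: "is_ASM n id_asm"
  unfolding is_ASM_def id_asm_def by (auto simp: sum.delta')

lemma corner_sum_id_asm: "corner_sum id_asm i j = int (min i j)"
proof -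
  have "corner_sum id_asm i j = (\<Sum>p=1..i. if p \<le> j then 1 else 0)"
    unfolding corner_sum_def id_asm_def by (intro sum.cong refl) (auto simp: sum.delta')
  also have "\<dots> = int (min i j)"
    by (induction i) (auto simp: min_def)
  finally show ?thesis .
qed

lemma asm_le_id_asm: "is_ASM n A \<Longrightarrow> asm_le n id_asm A"
  unfolding asm_le_def corner_sum_id_asm by (auto intro: asm_corner_sum_le_min)

definition corner_gap :: "(nat \<Rightarrow> nat \<Rightarrow> int) \<Rightarrow> (nat \<Rightarrow> nat \<Rightarrow> int) \<Rightarrow> nat \<Rightarrow> nat \<Rightarrow> nat" where
  "corner_gap A B i j = nat (corner_sum A i j - corner_sum B i j)"

lemma corner_gap_0_left [simp]: "corner_gap A B 0 j = 0"
  and corner_gap_0_right [simp]: "corner_gap A B i 0 = 0"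
  by (simp_all add: corner_gap_def)

lemma asm_corner_gap_last_row: "is_ASM n A \<Longrightarrow> is_ASM n B \<Longrightarrow> j \<le> n \<Longrightarrow> corner_gap A B n j = 0"
  and asm_corner_gap_last_col: "is_ASM n A \<Longrightarrow> is_ASM n B \<Longrightarrow> i \<le> n \<Longrightarrow> corner_gap A B i n = 0"
  by (simp_all add: corner_gap_def asm_corner_sum_last_row asm_corner_sum_last_col)

lemma int_corner_gap:
  assumes "asm_le n A B" "i \<le> n" "j \<le> n"
  shows "int (corner_gap A B i j) = corner_sum A i j - corner_sum B i j"
  using assms unfolding asm_le_def corner_gap_def
  by (cases "i = 0 \<or> j = 0") auto

text \<open>Entrywise form, with both sides made nonnegative, of
  \<open>A - B = \<Sum> d(i,j) (E(i,j) + E(i+1,j+1) - E(i,j+1) - E(i+1,j))\<close> where \<open>d = corner_gap A B\<close>.\<close>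
lemma asm_exponent_exchange:
  assumes le: "asm_le n A B" and p: "p \<in> {1..n}" and q: "q \<in> {1..n}"
  defines "d \<equiv> corner_gap A B"
  shows "nat (A p q) + nat (- B p q) + (d p (q - 1) + d (p - 1) q)
       = nat (B p q) + nat (- A p q) + (d p q + d (p - 1) (q - 1))"
proof -
  have gap: "int (d i j) = corner_sum A i j - corner_sum B i j" if "i \<le> n" "j \<le> n" for i j
    unfolding d_def using int_corner_gap[OF le that] .
  have bounds: "p \<le> n" "q \<le> n" "p - 1 \<le> n" "q - 1 \<le> n"
    using p q by auto
  have "A p q - B p q = int (d p q) - int (d (p - 1) q) - int (d p (q - 1)) + int (d (p - 1) (q - 1))"
    using corner_sum_inclusion_exclusion[of p q A] corner_sum_inclusion_exclusion[of p q B] p q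
      gap[OF bounds(1,2)] gap[OF bounds(3,2)] gap[OF bounds(1,4)] gap[OF bounds(3,4)]
    by simp
  then show ?thesis by linarith
qed

section \<open>Monomials\<close>

definition xmono_nat :: "nat \<Rightarrow> (nat \<Rightarrow> nat \<Rightarrow> nat) \<Rightarrow> (nat \<Rightarrow> nat \<Rightarrow> real) \<Rightarrow> real" where
  "xmono_nat n e M = (\<Prod>i\<in>{1..n}. \<Prod>j\<in>{1..n}. M i j ^ e i j)"

lemma xmono_nat_add: "xmono_nat n (\<lambda>i j. e i j + f i j) M = xmono_nat n e M * xmono_nat n f M"
  unfolding xmono_nat_def by (simp add: prod.distrib power_add)

lemma xmono_nat_cong:
  "(\<And>i j. i \<in> {1..n} \<Longrightarrow> j \<in> {1..n} \<Longrightarrow> e i j = f i j) \<Longrightarrow> xmono_nat n e M = xmono_nat n f M"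
  unfolding xmono_nat_def by (intro prod.cong refl) auto

lemma xmono_nat_eq_0_iff:
  "xmono_nat n e M = 0 \<longleftrightarrow> (\<exists>i\<in>{1..n}. \<exists>j\<in>{1..n}. M i j = 0 \<and> e i j > 0)"
  unfolding xmono_nat_def by (auto simp: prod_zero_iff)

lemma xmono_neg_part_nonzero:
  "xmono_dom n A M \<Longrightarrow> xmono_nat n (\<lambda>i j. nat (- A i j)) M \<noteq> 0"
  unfolding xmono_nat_eq_0_iff xmono_dom_def by auto

lemma xmono_times_neg_part:
  assumes "xmono_dom n A M"
  shows "xmono n A M * xmono_nat n (\<lambda>i j. nat (- A i j)) M = xmono_nat n (\<lambda>i j. nat (A i j)) M"
  unfolding xmono_def xmono_nat_def prod.distrib[symmetric]
proof (intro prod.cong refl)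
  fix i j assume "i \<in> {1..n}" "j \<in> {1..n}"
  then have "A i j < 0 \<Longrightarrow> M i j \<noteq> 0" using assms unfolding xmono_dom_def by blast
  then show "M i j powi A i j * M i j ^ nat (- A i j) = M i j ^ nat (A i j)"
    by (cases "A i j < 0") (auto simp: power_int_def field_simps)
qed

lemma xmono_dom_if_neg_parts_nonzero:
  assumes "xmono_nat n (\<lambda>i j. nat (- A i j) + nat (- B i j)) M \<noteq> 0"
  shows "xmono_dom n A M" "xmono_dom n B M"
  using assms by (auto simp: xmono_nat_eq_0_iff xmono_dom_def)

lemma xmono_common_denominator:
  assumes "xmono_nat n (\<lambda>i j. nat (- A i j) + nat (- B i j)) M \<noteq> 0"
  shows "xmono n A M = xmono_nat n (\<lambda>i j. nat (A i j) + nat (- B i j)) M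
                       / xmono_nat n (\<lambda>i j. nat (- A i j) + nat (- B i j)) M"
    and "xmono n B M = xmono_nat n (\<lambda>i j. nat (B i j) + nat (- A i j)) M
                       / xmono_nat n (\<lambda>i j. nat (- A i j) + nat (- B i j)) M"
proof -
  note dom = xmono_dom_if_neg_parts_nonzero[OF assms]
  have "xmono n A M * xmono_nat n (\<lambda>i j. nat (- A i j) + nat (- B i j)) M
      = xmono_nat n (\<lambda>i j. nat (A i j) + nat (- B i j)) M"
    and "xmono n B M * xmono_nat n (\<lambda>i j. nat (- A i j) + nat (- B i j)) M
      = xmono_nat n (\<lambda>i j. nat (B i j) + nat (- A i j)) M"
    unfolding xmono_nat_add xmono_times_neg_part[OF dom(1), symmetric]
      xmono_times_neg_part[OF dom(2), symmetric]
    by (simp_all only: ac_simps)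
  with assms show "xmono n A M = xmono_nat n (\<lambda>i j. nat (A i j) + nat (- B i j)) M
                       / xmono_nat n (\<lambda>i j. nat (- A i j) + nat (- B i j)) M"
    and "xmono n B M = xmono_nat n (\<lambda>i j. nat (B i j) + nat (- A i j)) M
                       / xmono_nat n (\<lambda>i j. nat (- A i j) + nat (- B i j)) M"
    by (simp_all add: field_simps)
qed

lemma xmono_mult: "xmono n A (\<lambda>i j. M i j * N i j) = xmono n A M * xmono n A N"
  unfolding xmono_def by (simp add: power_int_mult_distrib prod.distrib)

lemma xmono_pos: "(\<And>i j. i \<in> {1..n} \<Longrightarrow> j \<in> {1..n} \<Longrightarrow> M i j > 0) \<Longrightarrow> xmono n A M > 0"
  unfolding xmono_def by (intro prod_pos zero_less_power_int) auto

lemma xmono_dom_if_pos: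
  "(\<And>i j. i \<in> {1..n} \<Longrightarrow> j \<in> {1..n} \<Longrightarrow> M i j > 0) \<Longrightarrow> xmono_dom n A M"
  unfolding xmono_dom_def by fastforce

lemma xmono_nonneg: "(\<And>i j. i \<in> {1..n} \<Longrightarrow> j \<in> {1..n} \<Longrightarrow> M i j \<ge> 0) \<Longrightarrow> xmono n A M \<ge> 0"
  unfolding xmono_def by (intro prod_nonneg zero_le_power_int) auto

lemma xmono_eq_0_if_vanishing:
  assumes B: "is_ASM n B" and "n > 0" and zero: "\<And>i j. i \<in> {1..n} \<Longrightarrow> j \<in> {1..n} \<Longrightarrow> M i j = 0"
  shows "xmono n B M = 0"
proof -
  have one: "1 \<in> {1..n}"
    using \<open>n > 0\<close> by simp
  then obtain j where j: "j \<in> {1..n}" "B 1 j = 1"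
    using asm_row_has_one[OF B] by blast
  then have "M 1 j powi B 1 j = 0"
    using zero[OF one] by simp
  then have "(\<Prod>j\<in>{1..n}. M 1 j powi B 1 j) = 0"
    using j(1) by (meson finite_atLeastAtMost prod_zero)
  with one show ?thesis
    unfolding xmono_def by (meson finite_atLeastAtMost prod_zero)
qed

lemma tendsto_xmono:
  assumes "\<And>i j. i \<in> {1..n} \<Longrightarrow> j \<in> {1..n} \<Longrightarrow> ((\<lambda>t. M t i j) \<longlongrightarrow> L i j) F"
    and "xmono_dom n C L"
  shows "((\<lambda>t. xmono n C (M t)) \<longlongrightarrow> xmono n C L) F"
  unfolding xmono_def
  by (intro tendsto_prod tendsto_power_int' assms(1)) (use assms(2) in \<open>force simp: xmono_dom_def\<close>)+

lemma prod_power_int: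
  fixes t :: "'a::field"
  assumes "t \<noteq> 0" "finite S"
  shows "(\<Prod>i\<in>S. t powi f i) = t powi (\<Sum>i\<in>S. f i)"
  using assms(2) by (induction S rule: finite_induct) (auto simp: power_int_add assms(1))

lemma xmono_block_scale:
  assumes "t \<noteq> 0" "i0 \<le> n" "j0 \<le> n"
  shows "xmono n C (\<lambda>i j. (if i \<le> i0 \<and> j \<le> j0 then t else 1) * M i j) = t powi corner_sum C i0 j0 * xmono n C M"
proof -
  have "(\<Sum>i=1..n. \<Sum>j=1..n. if i \<le> i0 \<and> j \<le> j0 then C i j else 0)
      = (\<Sum>i=1..i0. \<Sum>j=1..n. if j \<le> j0 then C i j else 0)"
    by (rule sum.mono_neutral_cong_right) (use assms in auto)
  also have "\<dots> = corner_sum C i0 j0"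
    unfolding corner_sum_def by (intro sum.cong refl sum.mono_neutral_cong_right) (use assms in auto)
  finally have sum_restrict:
    "(\<Sum>i=1..n. \<Sum>j=1..n. if i \<le> i0 \<and> j \<le> j0 then C i j else 0) = corner_sum C i0 j0" .
  have "xmono n C (\<lambda>i j. if i \<le> i0 \<and> j \<le> j0 then t else 1)
      = (\<Prod>i=1..n. \<Prod>j=1..n. t powi (if i \<le> i0 \<and> j \<le> j0 then C i j else 0))"
    unfolding xmono_def by (intro prod.cong refl) auto
  also have "\<dots> = t powi corner_sum C i0 j0"
    by (simp only: prod_power_int[OF assms(1)] finite_atLeastAtMost sum_restrict)
  finally show ?thesis
    by (simp add: xmono_mult)
qed

lemma prod_shift_vanishing:
  fixes g :: "nat \<Rightarrow> 'a::comm_monoid_mult"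
  assumes "g 0 = 1" "g n = 1"
  shows "(\<Prod>i=1..n. g (i - 1)) = (\<Prod>i=1..n. g i)"
proof (cases n)
  case (Suc m)
  have "(\<Prod>i=1..Suc m. g (i - 1)) = (\<Prod>i=0..m. g i)"
    using prod.shift_bounds_cl_Suc_ivl[of "\<lambda>i. g (i - 1)" 0 m] by simp
  also have "\<dots> = (\<Prod>i=1..m. g i)"
    using assms(1) by (simp add: prod.atLeast_Suc_atMost)
  also have "\<dots> = (\<Prod>i=1..Suc m. g i)"
    using assms(2) Suc by simp
  finally show ?thesis using Suc by simp
qed simp

lemma xmono_nat_shift_rows:
  assumes "\<And>j. j \<in> {1..n} \<Longrightarrow> e 0 j = 0 \<and> e n j = 0"
  shows "xmono_nat n e (\<lambda>i j. M (Suc i) j) = xmono_nat n (\<lambda>i j. e (i - 1) j) M"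
proof -
  have "xmono_nat n (\<lambda>i j. e (i - 1) j) M = (\<Prod>i=1..n. (\<lambda>i. \<Prod>j=1..n. M (Suc i) j ^ e i j) (i - 1))"
    unfolding xmono_nat_def by (intro prod.cong refl) auto
  also have "\<dots> = xmono_nat n e (\<lambda>i j. M (Suc i) j)"
    unfolding xmono_nat_def by (rule prod_shift_vanishing) (use assms in auto)
  finally show ?thesis ..
qed

lemma xmono_nat_shift_cols:
  assumes "\<And>i. i \<in> {1..n} \<Longrightarrow> e i 0 = 0 \<and> e i n = 0"
  shows "xmono_nat n e (\<lambda>i j. M i (Suc j)) = xmono_nat n (\<lambda>i j. e i (j - 1)) M"
proof -
  have "xmono_nat n (\<lambda>i j. e i (j - 1)) M = (\<Prod>i=1..n. \<Prod>j=1..n. (\<lambda>j. M i (Suc j) ^ e i j) (j - 1))"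
    unfolding xmono_nat_def by (intro prod.cong refl) auto
  also have "\<dots> = xmono_nat n e (\<lambda>i j. M i (Suc j))"
    unfolding xmono_nat_def by (intro prod.cong refl prod_shift_vanishing) (use assms in auto)
  finally show ?thesis ..
qed

section \<open>The exchange identity\<close>

definition grid_list :: "nat \<Rightarrow> (nat \<Rightarrow> nat \<Rightarrow> nat) \<Rightarrow> (nat \<times> nat) list" where
  "grid_list n e = concat (map (\<lambda>i. concat (map (\<lambda>j. replicate (e i j) (i, j)) [1..<Suc n])) [1..<Suc n])"

lemma set_grid_list: "set (grid_list n e) = {(i, j). i \<in> {1..n} \<and> j \<in> {1..n} \<and> e i j > 0}"
  unfolding grid_list_def by (auto simp del: upt_Suc)

lemma prod_list_grid_list:
  fixes f :: "nat \<times> nat \<Rightarrow> 'a::comm_monoid_mult"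
  shows "(\<Prod>x\<leftarrow>grid_list n e. f x) = (\<Prod>i=1..n. \<Prod>j=1..n. f (i, j) ^ e i j)"
proof -
  have concat: "prod_list (concat xss) = prod_list (map prod_list xss)" for xss :: "'a list list"
    by (induction xss) auto
  have interval: "(\<Prod>i\<leftarrow>[a..<Suc b]. g i) = (\<Prod>i=a..b. g i)" for a b and g :: "nat \<Rightarrow> 'a"
    by (simp add: prod.distinct_set_conv_list[symmetric] atLeastLessThanSuc_atLeastAtMost del: upt_Suc)
  show ?thesis
    by (simp add: grid_list_def map_concat concat comp_def interval del: upt_Suc)
qed

fun diag_prod :: "(nat \<Rightarrow> nat \<Rightarrow> real) \<Rightarrow> nat \<times> nat \<Rightarrow> real" where
  "diag_prod M (i, j) = M i j * M (Suc i) (Suc j)"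

fun antidiag_prod :: "(nat \<Rightarrow> nat \<Rightarrow> real) \<Rightarrow> nat \<times> nat \<Rightarrow> real" where
  "antidiag_prod M (i, j) = M i (Suc j) * M (Suc i) j"

context
  fixes n :: nat and d :: "nat \<Rightarrow> nat \<Rightarrow> nat"
  assumes vanishing_rows: "\<And>j. j \<le> n \<Longrightarrow> d 0 j = 0 \<and> d n j = 0"
    and vanishing_cols: "\<And>i. i \<le> n \<Longrightarrow> d i 0 = 0 \<and> d i n = 0"
begin

lemma prod_diag_grid_list:
  "(\<Prod>x\<leftarrow>grid_list n d. diag_prod M x) = xmono_nat n (\<lambda>i j. d i j + d (i - 1) (j - 1)) M"
proof -
  have "(\<Prod>x\<leftarrow>grid_list n d. diag_prod M x) = xmono_nat n d M * xmono_nat n d (\<lambda>i j. M (Suc i) (Suc j))"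
    unfolding prod_list_grid_list xmono_nat_def by (simp add: power_mult_distrib prod.distrib)
  also have "xmono_nat n d (\<lambda>i j. M (Suc i) (Suc j)) = xmono_nat n (\<lambda>i j. d (i - 1) j) (\<lambda>i j. M i (Suc j))"
    by (rule xmono_nat_shift_rows) (use vanishing_rows in auto)
  also have "\<dots> = xmono_nat n (\<lambda>i j. d (i - 1) (j - 1)) M"
    by (rule xmono_nat_shift_cols) (use vanishing_cols in auto)
  finally show ?thesis by (simp add: xmono_nat_add)
qed

lemma prod_antidiag_grid_list:
  "(\<Prod>x\<leftarrow>grid_list n d. antidiag_prod M x) = xmono_nat n (\<lambda>i j. d i (j - 1) + d (i - 1) j) M"
proof -
  have "(\<Prod>x\<leftarrow>grid_list n d. antidiag_prod M x)
      = xmono_nat n d (\<lambda>i j. M i (Suc j)) * xmono_nat n d (\<lambda>i j. M (Suc i) j)"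
    unfolding prod_list_grid_list xmono_nat_def by (simp add: power_mult_distrib prod.distrib)
  also have "xmono_nat n d (\<lambda>i j. M i (Suc j)) = xmono_nat n (\<lambda>i j. d i (j - 1)) M"
    by (rule xmono_nat_shift_cols) (use vanishing_cols in auto)
  also have "xmono_nat n d (\<lambda>i j. M (Suc i) j) = xmono_nat n (\<lambda>i j. d (i - 1) j) M"
    by (rule xmono_nat_shift_rows) (use vanishing_rows in auto)
  finally show ?thesis by (simp add: xmono_nat_add)
qed

end

abbreviation gap_list :: "nat \<Rightarrow> (nat \<Rightarrow> nat \<Rightarrow> int) \<Rightarrow> (nat \<Rightarrow> nat \<Rightarrow> int) \<Rightarrow> (nat \<times> nat) list" where
  "gap_list n A B \<equiv> grid_list n (corner_gap A B)"

lemma gap_list_bounds: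
  assumes "is_ASM n A" "is_ASM n B" "(i, j) \<in> set (gap_list n A B)"
  shows "1 \<le> i \<and> i < n \<and> 1 \<le> j \<and> j < n"
proof -
  have "i \<in> {1..n}" "j \<in> {1..n}" "corner_gap A B i j > 0"
    using assms(3) unfolding set_grid_list by auto
  moreover have "i \<noteq> n" "j \<noteq> n"
    using calculation asm_corner_gap_last_row[OF assms(1,2)] asm_corner_gap_last_col[OF assms(1,2)] by auto
  ultimately show ?thesis by auto
qed

lemma xmono_nat_exchange:
  assumes A: "is_ASM n A" and B: "is_ASM n B" and le: "asm_le n A B"
  shows "xmono_nat n (\<lambda>i j. nat (A i j) + nat (- B i j)) M * (\<Prod>x\<leftarrow>gap_list n A B. antidiag_prod M x)
       = xmono_nat n (\<lambda>i j. nat (B i j) + nat (- A i j)) M * (\<Prod>x\<leftarrow>gap_list n A B. diag_prod M x)"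
proof -
  have rows: "corner_gap A B 0 j = 0 \<and> corner_gap A B n j = 0" if "j \<le> n" for j
    using asm_corner_gap_last_row[OF A B that] by simp
  have cols: "corner_gap A B i 0 = 0 \<and> corner_gap A B i n = 0" if "i \<le> n" for i
    using asm_corner_gap_last_col[OF A B that] by simp
  have diag: "(\<Prod>x\<leftarrow>gap_list n A B. diag_prod M x)
      = xmono_nat n (\<lambda>i j. corner_gap A B i j + corner_gap A B (i - 1) (j - 1)) M"
    by (rule prod_diag_grid_list) (use rows cols in auto)
  have antidiag: "(\<Prod>x\<leftarrow>gap_list n A B. antidiag_prod M x)
      = xmono_nat n (\<lambda>i j. corner_gap A B i (j - 1) + corner_gap A B (i - 1) j) M"
    by (rule prod_antidiag_grid_list) (use rows cols in auto)
  have "xmono_nat n (\<lambda>i j. nat (A i j) + nat (- B i j)) M * (\<Prod>x\<leftarrow>gap_list n A B. antidiag_prod M x)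
      = xmono_nat n (\<lambda>i j. nat (A i j) + nat (- B i j)
          + (corner_gap A B i (j - 1) + corner_gap A B (i - 1) j)) M"
    by (simp only: antidiag xmono_nat_add)
  also have "\<dots> = xmono_nat n (\<lambda>i j. nat (B i j) + nat (- A i j)
          + (corner_gap A B i j + corner_gap A B (i - 1) (j - 1))) M"
    by (rule xmono_nat_cong) (rule asm_exponent_exchange[OF le])
  also have "\<dots> = xmono_nat n (\<lambda>i j. nat (B i j) + nat (- A i j)) M * (\<Prod>x\<leftarrow>gap_list n A B. diag_prod M x)"
    by (simp only: diag xmono_nat_add)
  finally show ?thesis .
qed

lemma xmono_exchange:
  assumes A: "is_ASM n A" and B: "is_ASM n B" and le: "asm_le n A B"
    and dom: "xmono_dom n A M" "xmono_dom n B M"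
  shows "xmono n A M * (\<Prod>x\<leftarrow>gap_list n A B. antidiag_prod M x)
       = xmono n B M * (\<Prod>x\<leftarrow>gap_list n A B. diag_prod M x)"
proof -
  let ?negA = "xmono_nat n (\<lambda>i j. nat (- A i j)) M" and ?negB = "xmono_nat n (\<lambda>i j. nat (- B i j)) M"
  have "(xmono n A M * (\<Prod>x\<leftarrow>gap_list n A B. antidiag_prod M x)) * (?negA * ?negB)
      = xmono_nat n (\<lambda>i j. nat (A i j) + nat (- B i j)) M * (\<Prod>x\<leftarrow>gap_list n A B. antidiag_prod M x)"
    by (simp add: xmono_nat_add xmono_times_neg_part[OF dom(1), symmetric] ac_simps)
  also have "\<dots> = xmono_nat n (\<lambda>i j. nat (B i j) + nat (- A i j)) M * (\<Prod>x\<leftarrow>gap_list n A B. diag_prod M x)"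
    by (rule xmono_nat_exchange[OF A B le])
  also have "\<dots> = (xmono n B M * (\<Prod>x\<leftarrow>gap_list n A B. diag_prod M x)) * (?negA * ?negB)"
    by (simp add: xmono_nat_add xmono_times_neg_part[OF dom(2), symmetric] ac_simps)
  finally show ?thesis
    using xmono_neg_part_nonzero[OF dom(1)] xmono_neg_part_nonzero[OF dom(2)] by simp
qed

definition q_degree :: "nat \<Rightarrow> (nat \<Rightarrow> nat \<Rightarrow> int) \<Rightarrow> nat" where
  "q_degree n A = (\<Sum>i=1..n. \<Sum>j=1..n. corner_gap id_asm A i j)"

text \<open>On \<open>qmat q (\<lambda>_ _. 1)\<close> every antidiagonal product is \<open>q\<close> times the diagonal one, so the
  exchange identity for \<open>id_asm \<le> A\<close> evaluates \<open>x\<^sup>A\<close> there.\<close>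
lemma xmono_qmat_ones:
  assumes A: "is_ASM n A" and q: "q > 0"
  shows "xmono n A (qmat q (\<lambda>_ _. 1)) = q ^ q_degree n A"
proof -
  define W where "W = qmat q (\<lambda>_ _. 1)"
  have W_pos: "W i j > 0" for i j
    using q by (simp add: W_def qmat_def)
  have dom: "xmono_dom n C W" for C
    using W_pos by (rule xmono_dom_if_pos)
  have id: "xmono n id_asm W = 1"
    unfolding xmono_def using q by (intro prod.neutral ballI) (simp add: id_asm_def W_def qmat_def)
  have antidiag_W: "antidiag_prod W x = q * diag_prod W x" for x
  proof (cases x)
    case (Pair i j)
    have "real_of_int ((int i - int (Suc j))\<^sup>2) / 2 + real_of_int ((int (Suc i) - int j)\<^sup>2) / 2
        = 1 + (real_of_int ((int i - int j)\<^sup>2) / 2 + real_of_int ((int i - int j)\<^sup>2) / 2)"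
      by (simp add: power2_eq_square field_simps)
    then show ?thesis
      using q by (simp add: Pair W_def qmat_def powr_add[symmetric]) (simp add: powr_add)
  qed
  let ?gaps = "gap_list n id_asm A"
  have "(\<Prod>x\<leftarrow>?gaps. antidiag_prod W x) = (\<Prod>x\<leftarrow>?gaps. q) * (\<Prod>x\<leftarrow>?gaps. diag_prod W x)"
    unfolding antidiag_W prod_list_grid_list by (simp add: power_mult_distrib prod.distrib)
  also have "(\<Prod>x\<leftarrow>?gaps. q) = q ^ q_degree n A"
    unfolding prod_list_grid_list q_degree_def by (simp add: power_sum)
  finally have "xmono n A W * (\<Prod>x\<leftarrow>?gaps. diag_prod W x)
      = q ^ q_degree n A * (\<Prod>x\<leftarrow>?gaps. diag_prod W x)"
    using xmono_exchange[OF is_ASM_id_asm A asm_le_id_asm[OF A] dom dom] by (simp add: id) metis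
  moreover have "(\<Prod>x\<leftarrow>?gaps. diag_prod W x) > 0"
    unfolding prod_list_grid_list using W_pos by (intro prod_pos zero_less_power) auto
  ultimately show ?thesis
    unfolding W_def by (metis mult_right_cancel order_less_irrefl)
qed

lemma xmono_qmat:
  assumes "is_ASM n A" "q > 0"
  shows "xmono n A (qmat q M) = q ^ q_degree n A * xmono n A M"
proof -
  have "qmat q M = (\<lambda>i j. qmat q (\<lambda>_ _. 1) i j * M i j)"
    by (simp add: qmat_def)
  then show ?thesis
    by (simp add: xmono_mult xmono_qmat_ones[OF assms])
qed

section \<open>Subtraction-free representation\<close>

type_synonym minor_index = "nat list \<times> nat list"

lemma det_mat_2: "det (mat 2 2 f) = f (0, 0) * f (1, 1) - f (0, 1) * (f (1, 0) :: real)"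
  by (subst laplace_expansion_row[of _ 2 0])
    (auto simp: cofactor_def numeral_2_eq_2 det_single mat_delete_def)

lemma minor_entry [simp]: "minor M ([p], [q]) = M p q"
  unfolding minor_def by (simp add: det_single)

lemma minor_2x2 [simp]: "minor M ([p1, p2], [q1, q2]) = M p1 q1 * M p2 q2 - M p1 q2 * M p2 q1"
  unfolding minor_def by (simp add: det_mat_2[unfolded numeral_2_eq_2])

lemma minor_idx_entry [simp]: "minor_idx n ([i], [j]) \<longleftrightarrow> i \<in> {1..n} \<and> j \<in> {1..n}"
  by (auto simp: minor_idx_def)

lemma prod_list_pos:
  fixes f :: "'a \<Rightarrow> 'b::linordered_semidom"
  shows "(\<And>x. x \<in> set xs \<Longrightarrow> f x > 0) \<Longrightarrow> (\<Prod>x\<leftarrow>xs. f x) > 0"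
  by (induction xs) auto

lemma eval_F_Cons: "eval_F ((c, ms) # Fs) M = real c * (\<Prod>rc\<leftarrow>ms. minor M rc) + eval_F Fs M"
  by (simp add: eval_F_def)

lemma eval_F_prefix:
  "eval_F (map (\<lambda>(c, ms). (c, pre @ ms)) Fs) M = (\<Prod>rc\<leftarrow>pre. minor M rc) * eval_F Fs M"
  by (induction Fs) (auto simp: eval_F_def algebra_simps)

lemma prod_minors_concat:
  "(\<Prod>rc\<leftarrow>concat (map f xs). minor M rc) = (\<Prod>x\<leftarrow>xs. \<Prod>rc\<leftarrow>f x. minor M rc)"
  by (induction xs) auto

lemma eval_G_exponents_1: "eval_G (map (\<lambda>rc. (rc, 1)) ms) M = (\<Prod>rc\<leftarrow>ms. minor M rc)"
  by (induction ms) (simp_all add: eval_G_def)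

lemma eval_F_nonneg: "(\<And>c ms rc. (c, ms) \<in> set Fs \<Longrightarrow> rc \<in> set ms \<Longrightarrow> minor M rc > 0) \<Longrightarrow> eval_F Fs M \<ge> 0"
proof (induction Fs)
  case (Cons F Fs)
  obtain c ms where F: "F = (c, ms)" by (cases F)
  have "(\<Prod>rc\<leftarrow>ms. minor M rc) > 0"
    using Cons.prems[of c ms] by (intro prod_list_pos) (auto simp: F)
  moreover have "eval_F Fs M \<ge> 0"
    using Cons.prems by (intro Cons.IH) auto
  ultimately show ?case
    by (simp add: F eval_F_Cons)
qed (simp add: eval_F_def)

lemma eval_G_pos: "(\<And>rc d. (rc, d) \<in> set Gs \<Longrightarrow> minor M rc > 0) \<Longrightarrow> eval_G Gs M > 0"
  unfolding eval_G_def by (rule prod_list_pos) auto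

text \<open>Sum-of-products expansion of \<open>\<Prod>\<^sub>k a\<^sub>k - \<Prod>\<^sub>k b\<^sub>k = \<Sum>\<^sub>k b\<^sub>1\<cdots>b\<^sub>k\<^sub>-\<^sub>1 (a\<^sub>k - b\<^sub>k) a\<^sub>k\<^sub>+\<^sub>1\<cdots>\<close>,
  where each factor is a product of minors and each difference \<open>a\<^sub>k - b\<^sub>k\<close> is itself a minor.\<close>
fun telescope :: "('a \<Rightarrow> minor_index list) \<Rightarrow> ('a \<Rightarrow> minor_index list) \<Rightarrow> ('a \<Rightarrow> minor_index)
    \<Rightarrow> 'a list \<Rightarrow> (nat \<times> minor_index list) list" where
  "telescope a b d [] = []"
| "telescope a b d (x # xs) =
     (1, d x # concat (map a xs)) # map (\<lambda>(c, ms). (c, b x @ ms)) (telescope a b d xs)"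

lemma eval_F_telescope:
  assumes "\<And>x. x \<in> set xs \<Longrightarrow> minor M (d x) = (\<Prod>rc\<leftarrow>a x. minor M rc) - (\<Prod>rc\<leftarrow>b x. minor M rc)"
  shows "eval_F (telescope a b d xs) M
       = (\<Prod>x\<leftarrow>xs. \<Prod>rc\<leftarrow>a x. minor M rc) - (\<Prod>x\<leftarrow>xs. \<Prod>rc\<leftarrow>b x. minor M rc)"
  using assms
proof (induction xs)
  case Nil
  then show ?case by (simp add: eval_F_def)
next
  case (Cons x xs)
  have "eval_F (telescope a b d (x # xs)) M
      = minor M (d x) * (\<Prod>y\<leftarrow>xs. \<Prod>rc\<leftarrow>a y. minor M rc)
        + (\<Prod>rc\<leftarrow>b x. minor M rc) * eval_F (telescope a b d xs) M"
    by (simp add: eval_F_Cons eval_F_prefix prod_minors_concat)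
  then show ?case
    using Cons by (simp add: algebra_simps)
qed

lemma telescope_minors:
  "(c, ms) \<in> set (telescope a b d xs) \<Longrightarrow> rc \<in> set ms
   \<Longrightarrow> \<exists>x\<in>set xs. rc \<in> set (a x) \<or> rc \<in> set (b x) \<or> rc = d x"
  by (induction xs arbitrary: c ms) fastforce+

fun entry_minor :: "nat \<times> nat \<Rightarrow> minor_index" where
  "entry_minor (i, j) = ([i], [j])"

fun diag_minors :: "nat \<times> nat \<Rightarrow> minor_index list" where
  "diag_minors (i, j) = [([i], [j]), ([Suc i], [Suc j])]"

fun antidiag_minors :: "nat \<times> nat \<Rightarrow> minor_index list" where
  "antidiag_minors (i, j) = [([i], [Suc j]), ([Suc i], [j])]"

fun adjacent_minor :: "nat \<times> nat \<Rightarrow> minor_index" where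
  "adjacent_minor (i, j) = ([i, Suc i], [j, Suc j])"

lemma prod_diag_minors: "(\<Prod>rc\<leftarrow>diag_minors x. minor M rc) = diag_prod M x"
  and prod_antidiag_minors: "(\<Prod>rc\<leftarrow>antidiag_minors x. minor M rc) = antidiag_prod M x"
  and minor_adjacent_minor: "minor M (adjacent_minor x) = diag_prod M x - antidiag_prod M x"
  by (cases x; simp)+

lemma prod_entry_minors_grid_list:
  "(\<Prod>rc\<leftarrow>map entry_minor (grid_list n e). minor M rc) = xmono_nat n e M"
proof -
  have "(\<Prod>rc\<leftarrow>map entry_minor (grid_list n e). minor M rc) = (\<Prod>x\<leftarrow>grid_list n e. minor M (entry_minor x))"
    by (simp add: comp_def)
  also have "\<dots> = xmono_nat n e M"
    unfolding prod_list_grid_list xmono_nat_def by simp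
  finally show ?thesis .
qed

lemma minor_idx_entry_minor_grid_list: "x \<in> set (grid_list n e) \<Longrightarrow> minor_idx n (entry_minor x)"
  by (cases x) (simp add: set_grid_list)

lemma minor_idx_gap_list:
  assumes "is_ASM n A" "is_ASM n B" "x \<in> set (gap_list n A B)"
  shows "minor_idx n (adjacent_minor x)"
    and "rc \<in> set (diag_minors x) \<Longrightarrow> minor_idx n rc"
    and "rc \<in> set (antidiag_minors x) \<Longrightarrow> minor_idx n rc"
proof -
  obtain i j where x: "x = (i, j)" by (cases x)
  note bounds = gap_list_bounds[OF assms(1,2) assms(3)[unfolded x]]
  show "minor_idx n (adjacent_minor x)"
    and "rc \<in> set (diag_minors x) \<Longrightarrow> minor_idx n rc"
    and "rc \<in> set (antidiag_minors x) \<Longrightarrow> minor_idx n rc"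
    using bounds unfolding x by (auto simp: minor_idx_def)
qed

definition sfl_num :: "nat \<Rightarrow> (nat \<Rightarrow> nat \<Rightarrow> int) \<Rightarrow> (nat \<Rightarrow> nat \<Rightarrow> int) \<Rightarrow> (nat \<times> minor_index list) list" where
  "sfl_num n A B =
     map (\<lambda>(c, ms). (c, map entry_minor (grid_list n (\<lambda>i j. nat (B i j) + nat (- A i j))) @ ms))
       (telescope diag_minors antidiag_minors adjacent_minor (gap_list n A B))"

definition sfl_den :: "nat \<Rightarrow> (nat \<Rightarrow> nat \<Rightarrow> int) \<Rightarrow> (nat \<Rightarrow> nat \<Rightarrow> int) \<Rightarrow> (minor_index \<times> nat) list" where
  "sfl_den n A B =
     map (\<lambda>rc. (rc, 1)) (map entry_minor (grid_list n (\<lambda>i j. nat (- A i j) + nat (- B i j)))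
       @ concat (map antidiag_minors (gap_list n A B)))"

lemma eval_F_sfl_num:
  "eval_F (sfl_num n A B) M = xmono_nat n (\<lambda>i j. nat (B i j) + nat (- A i j)) M
     * ((\<Prod>x\<leftarrow>gap_list n A B. diag_prod M x) - (\<Prod>x\<leftarrow>gap_list n A B. antidiag_prod M x))"
proof -
  have "eval_F (telescope diag_minors antidiag_minors adjacent_minor xs) M
      = (\<Prod>x\<leftarrow>xs. diag_prod M x) - (\<Prod>x\<leftarrow>xs. antidiag_prod M x)" for xs
    using eval_F_telescope[of xs M adjacent_minor diag_minors antidiag_minors]
    by (simp only: prod_diag_minors prod_antidiag_minors minor_adjacent_minor)
  then show ?thesis
    unfolding sfl_num_def eval_F_prefix prod_entry_minors_grid_list by simp
qed

lemma eval_G_sfl_den: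
  "eval_G (sfl_den n A B) M
     = xmono_nat n (\<lambda>i j. nat (- A i j) + nat (- B i j)) M * (\<Prod>x\<leftarrow>gap_list n A B. antidiag_prod M x)"
  unfolding sfl_den_def eval_G_exponents_1
  unfolding map_append prod_list.append prod_entry_minors_grid_list prod_minors_concat prod_antidiag_minors ..

lemma sfl_identity:
  assumes A: "is_ASM n A" and B: "is_ASM n B" and le: "asm_le n A B"
    and dom: "xmono_dom n A M" "xmono_dom n B M"
  shows "(xmono n A M - xmono n B M) * eval_G (sfl_den n A B) M = eval_F (sfl_num n A B) M"
proof -
  let ?diag = "\<Prod>x\<leftarrow>gap_list n A B. diag_prod M x"
    and ?antidiag = "\<Prod>x\<leftarrow>gap_list n A B. antidiag_prod M x"
    and ?negA = "xmono_nat n (\<lambda>i j. nat (- A i j)) M" and ?negB = "xmono_nat n (\<lambda>i j. nat (- B i j)) M"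
  have "(xmono n A M - xmono n B M) * eval_G (sfl_den n A B) M
      = (xmono n A M * ?antidiag - xmono n B M * ?antidiag) * (?negA * ?negB)"
    unfolding eval_G_sfl_den xmono_nat_add by (simp add: algebra_simps)
  also have "\<dots> = (xmono n B M * ?negB) * ?negA * (?diag - ?antidiag)"
    unfolding xmono_exchange[OF A B le dom] by (simp only: right_diff_distrib left_diff_distrib ac_simps)
  also have "\<dots> = eval_F (sfl_num n A B) M"
    unfolding eval_F_sfl_num xmono_times_neg_part[OF dom(2)] xmono_nat_add by (simp only: ac_simps)
  finally show ?thesis .
qed

lemma sfl_den_nonzero_imp_dom:
  assumes "eval_G (sfl_den n A B) M \<noteq> 0"
  shows "xmono_dom n A M" "xmono_dom n B M"
  using assms xmono_dom_if_neg_parts_nonzero[of n A B M] by (auto simp: eval_G_sfl_den)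

lemma sfl_num_minors:
  assumes A: "is_ASM n A" and B: "is_ASM n B" and "(c, ms) \<in> set (sfl_num n A B)" "rc \<in> set ms"
  shows "minor_idx n rc"
proof -
  obtain ms' where ms: "ms = map entry_minor (grid_list n (\<lambda>i j. nat (B i j) + nat (- A i j))) @ ms'"
    and tel: "(c, ms') \<in> set (telescope diag_minors antidiag_minors adjacent_minor (gap_list n A B))"
    using assms(3) unfolding sfl_num_def by auto
  show ?thesis
  proof (cases "rc \<in> set ms'")
    case True
    then show ?thesis
      using telescope_minors[OF tel True] minor_idx_gap_list[OF A B] by blast
  next
    case False
    then show ?thesis
      using assms(4) minor_idx_entry_minor_grid_list unfolding ms by auto
  qed
qed

lemma sfl_den_minors:
  assumes A: "is_ASM n A" and B: "is_ASM n B" and "(rc, k) \<in> set (sfl_den n A B)"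
  shows "minor_idx n rc"
  using assms(3) minor_idx_entry_minor_grid_list minor_idx_gap_list(3)[OF A B]
  by (auto simp: sfl_den_def)

lemma poly_fun_xmono_nat: "poly_fun n (xmono_nat n e)"
  unfolding poly_fun_def xmono_nat_def by (intro exI[of _ "{e}"] exI[of _ "\<lambda>_. 1"]) simp

lemma poly_fun_scale:
  assumes "poly_fun n f"
  shows "poly_fun n (\<lambda>M. c * f M)"
proof -
  obtain S a where "finite S" and f: "\<And>M. f M = (\<Sum>e\<in>S. a e * (\<Prod>i\<in>{1..n}. \<Prod>j\<in>{1..n}. M i j ^ e i j))"
    using assms unfolding poly_fun_def by blast
  then show ?thesis
    unfolding poly_fun_def
    by (intro exI[of _ S] exI[of _ "\<lambda>e. c * a e"]) (simp add: f sum_distrib_left mult.assoc)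
qed

lemma poly_fun_add:
  assumes "poly_fun n f" "poly_fun n g"
  shows "poly_fun n (\<lambda>M. f M + g M)"
proof -
  let ?m = "\<lambda>e M. \<Prod>i\<in>{1..n}. \<Prod>j\<in>{1..n}. M i j ^ e i j"
  obtain S a where S: "finite S" and f: "\<And>M. f M = (\<Sum>e\<in>S. a e * ?m e M)"
    using assms(1) unfolding poly_fun_def by blast
  obtain T b where T: "finite T" and g: "\<And>M. g M = (\<Sum>e\<in>T. b e * ?m e M)"
    using assms(2) unfolding poly_fun_def by blast
  define c where "c e = (if e \<in> S then a e else 0) + (if e \<in> T then b e else 0)" for e
  have "f M + g M = (\<Sum>e\<in>S \<union> T. c e * ?m e M)" for M
  proof -
    have "(\<Sum>e\<in>S \<union> T. c e * ?m e M)
        = (\<Sum>e\<in>S \<union> T. if e \<in> S then a e * ?m e M else 0) + (\<Sum>e\<in>S \<union> T. if e \<in> T then b e * ?m e M else 0)"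
      unfolding c_def sum.distrib[symmetric] by (intro sum.cong refl) (simp add: distrib_right)
    also have "\<dots> = f M + g M"
      unfolding f g using S T by (intro arg_cong2[where f = "(+)"] sum.mono_neutral_cong_right) auto
    finally show ?thesis ..
  qed
  then show ?thesis
    unfolding poly_fun_def using S T by blast
qed

lemma poly_fun_diff: "poly_fun n f \<Longrightarrow> poly_fun n g \<Longrightarrow> poly_fun n (\<lambda>M. f M - g M)"
  using poly_fun_add[of n f "\<lambda>M. - 1 * g M"] poly_fun_scale[of n g "- 1"] by simp

lemma sfl_quotient_qmat:
  assumes A: "is_ASM n A" and B: "is_ASM n B" and le: "asm_le n A B"
    and q: "q > 0" and den: "eval_G (sfl_den n A B) (qmat q M) \<noteq> 0"
  shows "eval_F (sfl_num n A B) (qmat q M) / eval_G (sfl_den n A B) (qmat q M)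
       = q ^ q_degree n A * xmono n A M - q ^ q_degree n B * xmono n B M"
proof -
  have "eval_F (sfl_num n A B) (qmat q M) / eval_G (sfl_den n A B) (qmat q M)
      = xmono n A (qmat q M) - xmono n B (qmat q M)"
    using sfl_identity[OF A B le sfl_den_nonzero_imp_dom[OF den]] den
    by (metis nonzero_mult_div_cancel_right)
  then show ?thesis
    by (simp add: xmono_qmat[OF A q] xmono_qmat[OF B q])
qed

lemma asm_le_imp_qSFL:
  assumes A: "is_ASM n A" and B: "is_ASM n B" and le: "asm_le n A B"
  shows "qSFL n (\<lambda>M. xmono_dom n A M \<and> xmono_dom n B M) (\<lambda>M. xmono n A M - xmono n B M)"
proof -
  let ?Fs = "sfl_num n A B" and ?Gs = "sfl_den n A B"
  define X where "X = xmono_nat n (\<lambda>i j. nat (A i j) + nat (- B i j))"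
  define Y where "Y = xmono_nat n (\<lambda>i j. nat (B i j) + nat (- A i j))"
  define Q where "Q = xmono_nat n (\<lambda>i j. nat (- A i j) + nat (- B i j))"
  define N where "N = max (q_degree n A) (q_degree n B)"
  define P where "P k M = of_bool (k = q_degree n A) * X M - of_bool (k = q_degree n B) * Y M" for k M
  have expansion: "eval_F ?Fs (qmat q M) / eval_G ?Gs (qmat q M) = (\<Sum>k\<le>N. P k M / Q M * q ^ k)"
    if q: "q > 0" and den: "eval_G ?Gs (qmat q M) \<noteq> 0" and QM: "Q M \<noteq> 0" for q M
  proof -
    have "eval_F ?Fs (qmat q M) / eval_G ?Gs (qmat q M)
        = (\<Sum>k\<le>N. (if k = q_degree n A then X M / Q M * q ^ k else 0)
                 - (if k = q_degree n B then Y M / Q M * q ^ k else 0))"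
      using QM unfolding sfl_quotient_qmat[OF A B le q den] Q_def X_def Y_def
      by (simp add: xmono_common_denominator sum_subtractf N_def mult.commute)
    also have "\<dots> = (\<Sum>k\<le>N. P k M / Q M * q ^ k)"
      by (intro sum.cong refl) (simp add: P_def diff_divide_distrib left_diff_distrib)
    finally show ?thesis .
  qed
  have "\<forall>(c, ms)\<in>set ?Fs. \<forall>rc\<in>set ms. minor_idx n rc"
    using sfl_num_minors[OF A B] by fast
  moreover have "\<forall>(rc, d)\<in>set ?Gs. minor_idx n rc"
    using sfl_den_minors[OF A B] by fast
  moreover have "\<forall>M. xmono_dom n A M \<and> xmono_dom n B M
      \<longrightarrow> (xmono n A M - xmono n B M) * eval_G ?Gs M = eval_F ?Fs M"
    using sfl_identity[OF A B le] by blast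
  moreover have "poly_fun n (P k)" for k
    unfolding P_def X_def Y_def by (intro poly_fun_diff poly_fun_scale poly_fun_xmono_nat)
  moreover have "poly_fun n Q" "Q (\<lambda>_ _. 1) \<noteq> 0"
    by (simp_all add: Q_def poly_fun_xmono_nat xmono_nat_def)
  ultimately show ?thesis
    unfolding qSFL_def using expansion
    by (intro exI[of _ ?Fs] exI[of _ ?Gs] conjI exI[of _ N] exI[of _ P] exI[of _ "\<lambda>_. Q"]) auto
qed

section \<open>Totally nonnegative matrices\<close>

lemma prod_list_mono_nonneg:
  fixes f g :: "'a \<Rightarrow> 'b::linordered_semidom"
  assumes "\<And>x. x \<in> set xs \<Longrightarrow> 0 \<le> f x \<and> f x \<le> g x"
  shows "(\<Prod>x\<leftarrow>xs. f x) \<le> (\<Prod>x\<leftarrow>xs. g x)"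
  using assms
proof (induction xs)
  case (Cons x xs)
  have nonneg: "0 \<le> (\<Prod>y\<leftarrow>xs. f y)"
    using Cons.prems by (intro prod_list_nonneg) auto
  have fx: "0 \<le> f x" "f x \<le> g x"
    using Cons.prems[of x] by auto
  have IH: "(\<Prod>y\<leftarrow>xs. f y) \<le> (\<Prod>y\<leftarrow>xs. g y)"
    using Cons by simp
  show ?case
    using mult_mono[OF fx(2) IH order_trans[OF fx] nonneg] by simp
qed simp

lemma TNN_entry_nonneg: "TNN n M \<Longrightarrow> i \<in> {1..n} \<Longrightarrow> j \<in> {1..n} \<Longrightarrow> M i j \<ge> 0"
  unfolding TNN_def by (metis minor_entry minor_idx_entry)

definition minors2_nonneg :: "nat \<Rightarrow> (nat \<Rightarrow> nat \<Rightarrow> real) \<Rightarrow> bool" where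
  "minors2_nonneg n M \<longleftrightarrow> (\<forall>i1 i2 j1 j2. 1 \<le> i1 \<longrightarrow> i1 < i2 \<longrightarrow> i2 \<le> n \<longrightarrow> 1 \<le> j1 \<longrightarrow> j1 < j2 \<longrightarrow> j2 \<le> n
      \<longrightarrow> M i1 j2 * M i2 j1 \<le> M i1 j1 * M i2 j2)"

lemma TNN_imp_minors2_nonneg: "TNN n M \<Longrightarrow> minors2_nonneg n M"
  unfolding minors2_nonneg_def
proof (intro allI impI)
  fix i1 i2 j1 j2 assume "TNN n M" "1 \<le> i1" "i1 < i2" "i2 \<le> n" "1 \<le> j1" "j1 < j2" "j2 \<le> n"
  moreover from this have "minor_idx n ([i1, i2], [j1, j2])"
    by (auto simp: minor_idx_def)
  ultimately have "minor M ([i1, i2], [j1, j2]) \<ge> 0"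
    unfolding TNN_def by blast
  then show "M i1 j2 * M i2 j1 \<le> M i1 j1 * M i2 j2" by simp
qed

lemma xmono_le_if_pos:
  assumes A: "is_ASM n A" and B: "is_ASM n B" and le: "asm_le n A B"
    and pos: "\<And>i j. i \<in> {1..n} \<Longrightarrow> j \<in> {1..n} \<Longrightarrow> M i j > 0"
    and minors: "minors2_nonneg n M"
  shows "xmono n B M \<le> xmono n A M"
proof -
  let ?diag = "\<Prod>x\<leftarrow>gap_list n A B. diag_prod M x"
    and ?antidiag = "\<Prod>x\<leftarrow>gap_list n A B. antidiag_prod M x"
  have factors: "0 < antidiag_prod M x \<and> antidiag_prod M x \<le> diag_prod M x"
    if "x \<in> set (gap_list n A B)" for x
  proof -
    obtain i j where x: "x = (i, j)" by (cases x)
    have "1 \<le> i" "i < n" "1 \<le> j" "j < n"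
      using gap_list_bounds[OF A B that[unfolded x]] by auto
    then show ?thesis
      using pos minors unfolding x minors2_nonneg_def by simp
  qed
  have "?antidiag \<le> ?diag"
    using factors by (intro prod_list_mono_nonneg) (auto intro: less_imp_le)
  moreover have "?antidiag > 0"
    using factors by (intro prod_list_pos) auto
  moreover have "xmono n A M * ?antidiag = xmono n B M * ?diag"
    using xmono_exchange[OF A B le] xmono_dom_if_pos[where M = M, OF pos] by blast
  moreover have "xmono n B M > 0"
    using pos by (rule xmono_pos)
  ultimately have "xmono n B M * ?antidiag \<le> xmono n A M * ?antidiag"
    by (simp add: mult_left_mono)
  with \<open>?antidiag > 0\<close> show ?thesis
    by simp
qed

definition matmul :: "nat \<Rightarrow> (nat \<Rightarrow> nat \<Rightarrow> real) \<Rightarrow> (nat \<Rightarrow> nat \<Rightarrow> real) \<Rightarrow> nat \<Rightarrow> nat \<Rightarrow> real" where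
  "matmul n X Y i j = (\<Sum>r=1..n. X i r * Y r j)"

text \<open>Cauchy--Binet in order 2: symmetrising the double sum over the summation indices
  \<open>r, s\<close> pairs each \<open>2 \<times> 2\<close> minor of \<open>X\<close> with a \<open>2 \<times> 2\<close> minor of \<open>Y\<close> of the same sign.\<close>
lemma minors2_nonneg_matmul:
  assumes X: "minors2_nonneg n X" and Y: "minors2_nonneg n Y"
  shows "minors2_nonneg n (matmul n X Y)"
  unfolding minors2_nonneg_def
proof (intro allI impI)
  fix i1 i2 j1 j2 assume ij: "1 \<le> i1" "i1 < i2" "i2 \<le> n" "1 \<le> j1" "j1 < j2" "j2 \<le> n"
  define a where "a r s = X i1 r * X i2 s" for r s
  define b where "b r s = Y r j1 * Y s j2 - Y r j2 * Y s j1" for r s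
  have minor_eq: "matmul n X Y i1 j1 * matmul n X Y i2 j2 - matmul n X Y i1 j2 * matmul n X Y i2 j1
      = (\<Sum>r=1..n. \<Sum>s=1..n. a r s * b r s)"
    unfolding matmul_def a_def b_def sum_product
    by (simp add: sum_subtractf[symmetric] algebra_simps)
  have swap: "(\<Sum>r=1..n. \<Sum>s=1..n. a r s * b r s) = (\<Sum>r=1..n. \<Sum>s=1..n. a s r * b s r)"
    by (rule sum.swap)
  have "2 * (\<Sum>r=1..n. \<Sum>s=1..n. a r s * b r s) = (\<Sum>r=1..n. \<Sum>s=1..n. (a r s - a s r) * b r s)"
    by (subst mult_2, subst (2) swap) (simp add: sum.distrib[symmetric] b_def algebra_simps)
  also have "\<dots> \<ge> 0"
  proof (intro sum_nonneg)
    fix r s assume r: "r \<in> {1..n}" and s: "s \<in> {1..n}"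
    consider "r < s" | "r = s" | "s < r" by linarith
    then show "0 \<le> (a r s - a s r) * b r s"
    proof cases
      case 1
      have "0 \<le> a r s - a s r" using X ij r s 1 unfolding minors2_nonneg_def a_def by force
      moreover have "0 \<le> b r s" using Y ij r s 1 unfolding minors2_nonneg_def b_def by force
      ultimately show ?thesis by simp
    next
      case 2
      then show ?thesis by (simp add: b_def)
    next
      case 3
      have "a r s - a s r \<le> 0" using X ij r s 3 unfolding minors2_nonneg_def a_def by force
      moreover have "b r s \<le> 0" using Y ij r s 3 unfolding minors2_nonneg_def b_def by (force simp: algebra_simps)
      ultimately show ?thesis by (simp add: mult_nonpos_nonpos)
    qed
  qed
  finally show "matmul n X Y i1 j2 * matmul n X Y i2 j1 \<le> matmul n X Y i1 j1 * matmul n X Y i2 j2"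
    using minor_eq by simp
qed

definition decay_kernel :: "real \<Rightarrow> nat \<Rightarrow> nat \<Rightarrow> real" where
  "decay_kernel e i j = e ^ nat \<bar>int i - int j\<bar>"

lemma minors2_nonneg_decay_kernel:
  assumes "0 \<le> e" "e \<le> 1"
  shows "minors2_nonneg n (decay_kernel e)"
  unfolding minors2_nonneg_def decay_kernel_def power_add[symmetric]
proof (intro allI impI)
  fix i1 i2 j1 j2 :: nat assume "i1 < i2" "j1 < j2"
  then have "nat \<bar>int i1 - int j1\<bar> + nat \<bar>int i2 - int j2\<bar> \<le> nat \<bar>int i1 - int j2\<bar> + nat \<bar>int i2 - int j1\<bar>"
    by arith
  then show "e ^ (nat \<bar>int i1 - int j2\<bar> + nat \<bar>int i2 - int j1\<bar>) \<le> e ^ (nat \<bar>int i1 - int j1\<bar> + nat \<bar>int i2 - int j2\<bar>)"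
    using assms by (rule power_decreasing)
qed

definition smoothing :: "nat \<Rightarrow> real \<Rightarrow> (nat \<Rightarrow> nat \<Rightarrow> real) \<Rightarrow> nat \<Rightarrow> nat \<Rightarrow> real" where
  "smoothing n e M = matmul n (matmul n (decay_kernel e) M) (decay_kernel e)"

lemma minors2_nonneg_smoothing:
  "0 \<le> e \<Longrightarrow> e \<le> 1 \<Longrightarrow> minors2_nonneg n M \<Longrightarrow> minors2_nonneg n (smoothing n e M)"
  unfolding smoothing_def by (intro minors2_nonneg_matmul minors2_nonneg_decay_kernel)

lemma smoothing_pos:
  assumes e: "0 < e" and nonneg: "\<And>i j. i \<in> {1..n} \<Longrightarrow> j \<in> {1..n} \<Longrightarrow> M i j \<ge> 0"
    and i0: "i0 \<in> {1..n}" and j0: "j0 \<in> {1..n}" and pos: "M i0 j0 > 0"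
  shows "smoothing n e M i j > 0"
proof -
  have kernel: "decay_kernel e x y > 0" for x y
    using e by (simp add: decay_kernel_def)
  have row: "0 \<le> (\<Sum>r=1..n. decay_kernel e i r * M r s)" if "s \<in> {1..n}" for s
    using nonneg kernel that by (intro sum_nonneg mult_nonneg_nonneg) (auto intro: less_imp_le)
  have "0 < decay_kernel e i i0 * M i0 j0"
    using kernel pos by simp
  also have "\<dots> \<le> (\<Sum>r=1..n. decay_kernel e i r * M r j0)"
    using i0 j0 nonneg kernel by (intro member_le_sum mult_nonneg_nonneg) (auto intro: less_imp_le)
  finally have "0 < (\<Sum>r=1..n. decay_kernel e i r * M r j0) * decay_kernel e j0 j"
    using kernel by simp
  also have "\<dots> \<le> smoothing n e M i j"
    unfolding smoothing_def matmul_def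
    using j0 row kernel by (intro member_le_sum mult_nonneg_nonneg) (auto intro: less_imp_le)
  finally show ?thesis .
qed

lemma tendsto_smoothing:
  assumes "i \<in> {1..n}" "j \<in> {1..n}"
  shows "((\<lambda>e. smoothing n e M i j) \<longlongrightarrow> M i j) (at_right 0)"
proof -
  have kernel_0: "decay_kernel 0 x y * z = (if x = y then z else 0)" "z * decay_kernel 0 x y = (if x = y then z else 0)"
    for x y and z :: real
    by (simp_all add: decay_kernel_def)
  have "smoothing n 0 M i j = M i j"
    using assms by (simp add: smoothing_def matmul_def kernel_0)
  moreover have "((\<lambda>e. smoothing n e M i j) \<longlongrightarrow> smoothing n 0 M i j) (at_right 0)"
    unfolding smoothing_def matmul_def decay_kernel_def by (intro tendsto_intros)
  ultimately show ?thesis by simp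
qed

lemma xmono_le_if_minors2_nonneg:
  assumes A: "is_ASM n A" and B: "is_ASM n B" and le: "asm_le n A B"
    and nonneg: "\<And>i j. i \<in> {1..n} \<Longrightarrow> j \<in> {1..n} \<Longrightarrow> M i j \<ge> 0"
    and minors: "minors2_nonneg n M"
    and dom: "xmono_dom n A M" "xmono_dom n B M"
  shows "xmono n B M \<le> xmono n A M"
proof (cases "\<exists>i\<in>{1..n}. \<exists>j\<in>{1..n}. M i j \<noteq> 0")
  case True
  then obtain i0 j0 where i0: "i0 \<in> {1..n}" and j0: "j0 \<in> {1..n}" and pos: "M i0 j0 > 0"
    using nonneg by (metis less_eq_real_def)
  have "eventually (\<lambda>e. xmono n B (smoothing n e M) \<le> xmono n A (smoothing n e M)) (at_right 0)"
  proof (rule eventually_at_rightI[of 0 1])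
    fix e :: real assume "e \<in> {0<..<1}"
    then show "xmono n B (smoothing n e M) \<le> xmono n A (smoothing n e M)"
      using smoothing_pos[of e n M, OF _ nonneg i0 j0 pos] minors2_nonneg_smoothing[OF _ _ minors]
      by (intro xmono_le_if_pos[OF A B le]) auto
  qed simp
  moreover have "((\<lambda>e. xmono n C (smoothing n e M)) \<longlongrightarrow> xmono n C M) (at_right 0)"
    if "xmono_dom n C M" for C
    using tendsto_smoothing that by (rule tendsto_xmono)
  ultimately show ?thesis
    using tendsto_le[OF trivial_limit_at_right_real] dom by blast
next
  case False
  show ?thesis
  proof (cases "n = 0")
    case False
    then have "xmono n B M = 0"
      using \<open>\<not> (\<exists>i\<in>{1..n}. \<exists>j\<in>{1..n}. M i j \<noteq> 0)\<close> by (intro xmono_eq_0_if_vanishing[OF B]) auto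
    then show ?thesis
      using xmono_nonneg[of n M A] nonneg by simp
  qed (simp add: xmono_def)
qed

lemma asm_le_imp_qTNN:
  assumes A: "is_ASM n A" and B: "is_ASM n B" and le: "asm_le n A B"
  shows "qTNN n (\<lambda>M. xmono_dom n A M \<and> xmono_dom n B M) (\<lambda>M. xmono n A M - xmono n B M)"
  unfolding qTNN_def locally_TNN_fun_def locally_TNN_mat_def
proof (intro allI impI)
  fix q0 :: real and M
  assume "TNN n (qmat q0 M) \<and> xmono_dom n A (qmat q0 M) \<and> xmono_dom n B (qmat q0 M)"
  then show "0 \<le> xmono n A (qmat q0 M) - xmono n B (qmat q0 M)"
    using xmono_le_if_minors2_nonneg[OF A B le] TNN_entry_nonneg TNN_imp_minors2_nonneg by auto
qed

section \<open>Totally positive witnesses\<close>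

lemma det_scale_rows_cols:
  fixes f :: "nat \<Rightarrow> nat \<Rightarrow> real"
  shows "det (mat m m (\<lambda>(i, j). a i * b j * f i j))
       = (\<Prod>i<m. a i) * (\<Prod>j<m. b j) * det (mat m m (\<lambda>(i, j). f i j))"
proof -
  have term_eq: "(\<Prod>i = 0..<m. mat m m (\<lambda>(i, j). a i * b j * f i j) $$ (i, p i))
      = (\<Prod>i<m. a i) * (\<Prod>j<m. b j) * (\<Prod>i = 0..<m. mat m m (\<lambda>(i, j). f i j) $$ (i, p i))"
    if p: "p permutes {0..<m}" for p
  proof -
    have p_lt: "i < m \<Longrightarrow> p i < m" for i
      using permutes_in_image[OF p] by auto
    have "(\<Prod>i = 0..<m. mat m m (\<lambda>(i, j). a i * b j * f i j) $$ (i, p i))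
        = (\<Prod>i = 0..<m. a i) * (\<Prod>i = 0..<m. b (p i)) * (\<Prod>i = 0..<m. f i (p i))"
      by (simp add: p_lt prod.distrib)
    also have "(\<Prod>i = 0..<m. b (p i)) = (\<Prod>i = 0..<m. b i)"
      using prod.permute[OF p, of b] by (simp add: comp_def)
    also have "(\<Prod>i = 0..<m. f i (p i)) = (\<Prod>i = 0..<m. mat m m (\<lambda>(i, j). f i j) $$ (i, p i))"
      by (simp add: p_lt)
    finally show ?thesis by (simp add: atLeast0LessThan)
  qed
  have "det (mat m m (\<lambda>(i, j). a i * b j * f i j)) = (\<Sum>p \<in> {p. p permutes {0..<m}}.
      signof p * (\<Prod>i = 0..<m. mat m m (\<lambda>(i, j). a i * b j * f i j) $$ (i, p i)))"
    by (rule det_def') simp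
  also have "\<dots> = (\<Sum>p \<in> {p. p permutes {0..<m}}.
      signof p * ((\<Prod>i<m. a i) * (\<Prod>j<m. b j) * (\<Prod>i = 0..<m. mat m m (\<lambda>(i, j). f i j) $$ (i, p i))))"
    by (intro sum.cong refl) (simp only: term_eq mem_Collect_eq)
  also have "\<dots> = (\<Prod>i<m. a i) * (\<Prod>j<m. b j)
      * (\<Sum>p \<in> {p. p permutes {0..<m}}. signof p * (\<Prod>i = 0..<m. mat m m (\<lambda>(i, j). f i j) $$ (i, p i)))"
    by (simp add: sum_distrib_left algebra_simps)
  also have "(\<Sum>p \<in> {p. p permutes {0..<m}}. signof p * (\<Prod>i = 0..<m. mat m m (\<lambda>(i, j). f i j) $$ (i, p i)))
      = det (mat m m (\<lambda>(i, j). f i j))"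
    by (rule det_def'[symmetric]) simp
  finally show ?thesis .
qed

definition cauchy_mat :: "nat \<Rightarrow> (nat \<Rightarrow> real) \<Rightarrow> (nat \<Rightarrow> real) \<Rightarrow> real mat" where
  "cauchy_mat k x y = mat k k (\<lambda>(a, b). 1 / (x a + y b))"

definition cauchy_elim :: "nat \<Rightarrow> (nat \<Rightarrow> real) \<Rightarrow> (nat \<Rightarrow> real) \<Rightarrow> real mat" where
  "cauchy_elim k x y =
     mat k k (\<lambda>(i, j). if i = j then 1 else if j = 0 then - (x 0 + y 0) / (x i + y 0) else 0)"

lemma det_cauchy_elim: "det (cauchy_elim k x y) = 1"
proof -
  have "det (cauchy_elim k x y) = prod_list (diag_mat (cauchy_elim k x y))"
    by (rule det_lower_triangular[of k]) (simp_all add: cauchy_elim_def)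
  also have "diag_mat (cauchy_elim k x y) = replicate k 1"
    by (intro nth_equalityI) (simp_all add: diag_mat_def cauchy_elim_def)
  finally show ?thesis by simp
qed

lemma cauchy_elim_mult_cauchy_mat:
  assumes x: "\<And>i. i \<le> m \<Longrightarrow> x i > 0" and y: "\<And>j. j \<le> m \<Longrightarrow> y j > 0"
  defines "\<alpha> \<equiv> \<lambda>i. (x (Suc i) - x 0) / (x (Suc i) + y 0)"
    and "\<beta> \<equiv> \<lambda>j. (y (Suc j) - y 0) / (x 0 + y (Suc j))"
  shows "cauchy_elim (Suc m) x y * cauchy_mat (Suc m) x y
       = four_block_mat (mat 1 1 (\<lambda>_. 1 / (x 0 + y 0))) (mat 1 m (\<lambda>(_, j). 1 / (x 0 + y (Suc j))))
           (0\<^sub>m m 1) (mat m m (\<lambda>(i, j). \<alpha> i * \<beta> j * (1 / (x (Suc i) + y (Suc j)))))"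
    (is "?E * ?C = ?F")
proof (rule eq_matI)
  fix i j assume "i < dim_row ?F" "j < dim_col ?F"
  then have i: "i < Suc m" and j: "j < Suc m" by auto
  have "(?E * ?C) $$ (i, j) = (\<Sum>l = 0..<Suc m. ?E $$ (i, l) * ?C $$ (l, j))"
    using i j by (simp add: cauchy_elim_def cauchy_mat_def scalar_prod_def)
  also have "\<dots> = (\<Sum>l = 0..<Suc m. (if l = i then 1 / (x i + y j) else 0)
      + (if l = 0 \<and> i \<noteq> 0 then - (x 0 + y 0) / (x i + y 0) * (1 / (x 0 + y j)) else 0))"
    using i j by (intro sum.cong refl) (auto simp: cauchy_elim_def cauchy_mat_def)
  also have "\<dots> = (if i = 0 then 1 / (x 0 + y j)
      else 1 / (x i + y j) + - (x 0 + y 0) / (x i + y 0) * (1 / (x 0 + y j)))"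
    using i by (simp only: sum.distrib sum.delta' sum.delta) auto
  also have "\<dots> = ?F $$ (i, j)"
  proof (cases "i = 0")
    case False
    then obtain i' where i': "i = Suc i'" by (cases i) auto
    have pos: "x 0 > 0" "y 0 > 0" "x i > 0" "y j > 0"
      using x y i j by auto
    show ?thesis
    proof (cases j)
      case 0
      then show ?thesis
        using pos i' i by (simp add: divide_simps)
    next
      case (Suc j')
      have "1 / (x i + y j) + - (x 0 + y 0) / (x i + y 0) * (1 / (x 0 + y j))
          = \<alpha> i' * \<beta> j' * (1 / (x i + y j))"
        using pos unfolding \<alpha>_def \<beta>_def i' Suc by (simp add: divide_simps) (simp add: algebra_simps)
      then show ?thesis
        using i j i' Suc by simp
    qed
  qed (use j in simp)
  finally show "(?E * ?C) $$ (i, j) = ?F $$ (i, j)" .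
qed (auto simp: cauchy_elim_def cauchy_mat_def)

lemma det_cauchy_mat_Suc:
  assumes x: "\<And>i. i \<le> m \<Longrightarrow> x i > 0" and y: "\<And>j. j \<le> m \<Longrightarrow> y j > 0"
  shows "det (cauchy_mat (Suc m) x y) = 1 / (x 0 + y 0)
           * (\<Prod>i<m. (x (Suc i) - x 0) / (x (Suc i) + y 0)) * (\<Prod>j<m. (y (Suc j) - y 0) / (x 0 + y (Suc j)))
           * det (cauchy_mat m (\<lambda>i. x (Suc i)) (\<lambda>j. y (Suc j)))"
proof -
  define \<alpha> where "\<alpha> i = (x (Suc i) - x 0) / (x (Suc i) + y 0)" for i
  define \<beta> where "\<beta> j = (y (Suc j) - y 0) / (x 0 + y (Suc j))" for j
  have "det (cauchy_elim (Suc m) x y * cauchy_mat (Suc m) x y)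
      = det (cauchy_elim (Suc m) x y) * det (cauchy_mat (Suc m) x y)"
    by (rule det_mult[of _ "Suc m"]) (simp_all add: cauchy_elim_def cauchy_mat_def)
  then have "det (cauchy_mat (Suc m) x y) = det (cauchy_elim (Suc m) x y * cauchy_mat (Suc m) x y)"
    by (simp add: det_cauchy_elim)
  also have "cauchy_elim (Suc m) x y * cauchy_mat (Suc m) x y
      = four_block_mat (mat 1 1 (\<lambda>_. 1 / (x 0 + y 0))) (mat 1 m (\<lambda>(_, j). 1 / (x 0 + y (Suc j))))
          (0\<^sub>m m 1) (mat m m (\<lambda>(i, j). \<alpha> i * \<beta> j * (1 / (x (Suc i) + y (Suc j)))))"
    unfolding \<alpha>_def \<beta>_def by (rule cauchy_elim_mult_cauchy_mat) (use x y in auto)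
  also have "det \<dots> = det (mat 1 1 (\<lambda>_. 1 / (x 0 + y 0)))
      * det (mat m m (\<lambda>(i, j). \<alpha> i * \<beta> j * (1 / (x (Suc i) + y (Suc j)))))"
    by (rule det_four_block_mat_lower_left_zero_col) auto
  also have "det (mat 1 1 (\<lambda>_. 1 / (x 0 + y 0))) = 1 / (x 0 + y 0)"
    by (simp add: det_single)
  also have "det (mat m m (\<lambda>(i, j). \<alpha> i * \<beta> j * (1 / (x (Suc i) + y (Suc j)))))
      = (\<Prod>i<m. \<alpha> i) * (\<Prod>j<m. \<beta> j) * det (cauchy_mat m (\<lambda>i. x (Suc i)) (\<lambda>j. y (Suc j)))"
    unfolding cauchy_mat_def by (rule det_scale_rows_cols)
  finally show ?thesis
    by (simp add: \<alpha>_def \<beta>_def mult.assoc)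
qed

lemma det_cauchy_mat_pos:
  fixes x y :: "nat \<Rightarrow> real"
  assumes "\<And>i j. i < j \<Longrightarrow> j < k \<Longrightarrow> x i < x j" and "\<And>i j. i < j \<Longrightarrow> j < k \<Longrightarrow> y i < y j"
    and "\<And>i. i < k \<Longrightarrow> x i > 0" and "\<And>j. j < k \<Longrightarrow> y j > 0"
  shows "det (cauchy_mat k x y) > 0"
  using assms
proof (induction k arbitrary: x y)
  case 0
  then show ?case by (simp add: cauchy_mat_def)
next
  case (Suc m)
  note x_mono = Suc.prems(1) and y_mono = Suc.prems(2) and x_pos = Suc.prems(3) and y_pos = Suc.prems(4)
  have "(\<Prod>i<m. (x (Suc i) - x 0) / (x (Suc i) + y 0)) > 0" "(\<Prod>j<m. (y (Suc j) - y 0) / (x 0 + y (Suc j))) > 0"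
    using x_mono[of 0] y_mono[of 0] x_pos y_pos by (auto intro!: prod_pos divide_pos_pos add_pos_pos)
  moreover have "det (cauchy_mat m (\<lambda>i. x (Suc i)) (\<lambda>j. y (Suc j))) > 0"
    by (rule Suc.IH) (use x_mono y_mono x_pos y_pos in auto)
  moreover have "x 0 + y 0 > 0"
    using x_pos[of 0] y_pos[of 0] by simp
  ultimately show ?case
    by (simp add: det_cauchy_mat_Suc x_pos y_pos)
qed

lemma cauchy_totally_positive:
  fixes x y :: "nat \<Rightarrow> real"
  assumes x_mono: "\<And>i i'. 1 \<le> i \<Longrightarrow> i < i' \<Longrightarrow> x i < x i'" and y_mono: "\<And>j j'. 1 \<le> j \<Longrightarrow> j < j' \<Longrightarrow> y j < y j'"
    and x_pos: "\<And>i. 1 \<le> i \<Longrightarrow> x i > 0" and y_pos: "\<And>j. 1 \<le> j \<Longrightarrow> y j > 0"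
    and rc: "minor_idx n rc"
  shows "minor (\<lambda>i j. 1 / (x i + y j)) rc > 0"
proof -
  obtain rs cs where rc_eq: "rc = (rs, cs)" by (cases rc)
  have sorted: "sorted_wrt (<) rs" "sorted_wrt (<) cs" and len: "length cs = length rs"
    and range: "set rs \<subseteq> {1..n}" "set cs \<subseteq> {1..n}"
    using rc by (auto simp: rc_eq minor_idx_def)
  have rs_ge1: "1 \<le> rs ! a" and cs_ge1: "1 \<le> cs ! a" if "a < length rs" for a
  proof -
    have "rs ! a \<in> set rs" "cs ! a \<in> set cs"
      using that len by auto
    then show "1 \<le> rs ! a" "1 \<le> cs ! a"
      using range by auto
  qed
  have "det (cauchy_mat (length rs) (\<lambda>a. x (rs ! a)) (\<lambda>b. y (cs ! b))) > 0"
  proof (rule det_cauchy_mat_pos)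
    show "x (rs ! a) < x (rs ! b)" if "a < b" "b < length rs" for a b
      using x_mono[OF rs_ge1 sorted_wrt_nth_less[OF sorted(1) that]] that by simp
    show "y (cs ! a) < y (cs ! b)" if "a < b" "b < length rs" for a b
      using y_mono[OF cs_ge1 sorted_wrt_nth_less[OF sorted(2)]] that len by simp
  qed (use x_pos y_pos rs_ge1 cs_ge1 in auto)
  then show ?thesis
    by (simp add: rc_eq minor_def cauchy_mat_def)
qed

definition block_shift :: "real \<Rightarrow> nat \<Rightarrow> nat \<Rightarrow> real" where
  "block_shift d k p = (if p \<le> k then d * real p else 1 + real p)"

lemma block_shift_le: "0 < d \<Longrightarrow> d < 1 \<Longrightarrow> block_shift d k p \<le> 1 + real p"
  unfolding block_shift_def using mult_left_le_one_le[of "real p" d] by auto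

lemma block_shift_strict_mono:
  assumes "0 < d" "d < 1" "p < p'"
  shows "block_shift d k p < block_shift d k p'"
proof (cases "p' \<le> k")
  case True
  then show ?thesis
    using assms by (simp add: block_shift_def)
next
  case False
  then show ?thesis
    using block_shift_le[OF assms(1,2), of k p] assms(3) by (simp add: block_shift_def)
qed

lemma block_shift_pos: "0 < d \<Longrightarrow> 1 \<le> p \<Longrightarrow> block_shift d k p > 0"
  by (simp add: block_shift_def)

lemma tendsto_block_shift: "((\<lambda>d. block_shift d k p) \<longlongrightarrow> block_shift 0 k p) (at_right 0)"
proof -
  have "((\<lambda>d. d * real p) \<longlongrightarrow> 0 * real p) (at_right (0::real))"
    by (intro tendsto_intros)
  then show ?thesis
    by (simp add: block_shift_def)
qed

text \<open>A totally positive Cauchy matrix whose leading \<open>i\<^sub>0 \<times> j\<^sub>0\<close> block is of order \<open>1/d\<close>: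
  as \<open>d \<rightarrow> 0\<close>, a Laurent monomial \<open>x\<^sup>C\<close> on it grows like \<open>d\<^sup>-\<^sup>c\<close> with \<open>c = corner_sum C i\<^sub>0 j\<^sub>0\<close>.\<close>
definition block_cauchy :: "real \<Rightarrow> nat \<Rightarrow> nat \<Rightarrow> nat \<Rightarrow> nat \<Rightarrow> real" where
  "block_cauchy d i0 j0 i j = 1 / (block_shift d i0 i + block_shift d j0 j)"

definition block_cauchy_unscaled :: "real \<Rightarrow> nat \<Rightarrow> nat \<Rightarrow> nat \<Rightarrow> nat \<Rightarrow> real" where
  "block_cauchy_unscaled d i0 j0 i j =
     (if i \<le> i0 \<and> j \<le> j0 then 1 / (real i + real j) else block_cauchy d i0 j0 i j)"

lemma block_cauchy_totally_positive:
  assumes d: "0 < d" "d < 1" and rc: "minor_idx n rc"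
  shows "minor (block_cauchy d i0 j0) rc > 0"
  unfolding block_cauchy_def
  by (rule cauchy_totally_positive[where n = n and x = "\<lambda>i. block_shift d i0 i" and y = "\<lambda>j. block_shift d j0 j"])
    (simp_all add: block_shift_strict_mono[OF d] block_shift_pos[OF d(1)] rc)

lemma xmono_block_cauchy:
  assumes "0 < d" "i0 \<le> n" "j0 \<le> n"
  shows "xmono n C (block_cauchy d i0 j0)
       = (1 / d) powi corner_sum C i0 j0 * xmono n C (block_cauchy_unscaled d i0 j0)"
proof -
  have "1 / (d * real i + d * real j) = 1 / d * (1 / (real i + real j))" for i j
    by (simp add: distrib_left[symmetric])
  then have "block_cauchy d i0 j0
      = (\<lambda>i j. (if i \<le> i0 \<and> j \<le> j0 then 1 / d else 1) * block_cauchy_unscaled d i0 j0 i j)"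
    by (intro ext) (simp add: block_cauchy_def block_cauchy_unscaled_def block_shift_def)
  then show ?thesis
    using assms by (simp add: xmono_block_scale)
qed

lemma block_cauchy_unscaled_0_pos: "1 \<le> i \<Longrightarrow> 1 \<le> j \<Longrightarrow> block_cauchy_unscaled 0 i0 j0 i j > 0"
  by (auto simp: block_cauchy_unscaled_def block_cauchy_def block_shift_def)

lemma tendsto_block_cauchy_unscaled:
  assumes "1 \<le> i" "1 \<le> j"
  shows "((\<lambda>d. block_cauchy_unscaled d i0 j0 i j) \<longlongrightarrow> block_cauchy_unscaled 0 i0 j0 i j) (at_right 0)"
proof (cases "i \<le> i0 \<and> j \<le> j0")
  case False
  then have "block_shift 0 i0 i + block_shift 0 j0 j \<noteq> 0"
    using assms by (auto simp: block_shift_def)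
  then show ?thesis
    using False unfolding block_cauchy_unscaled_def block_cauchy_def
    by (auto intro!: tendsto_intros tendsto_block_shift)
qed (simp add: block_cauchy_unscaled_def)

lemma not_asm_le_imp_witness:
  assumes "\<not> asm_le n A B"
  obtains N where "\<And>rc. minor_idx n rc \<Longrightarrow> minor N rc > 0" and "xmono n A N < xmono n B N"
proof -
  obtain i0 j0 where i0: "i0 \<in> {1..n}" and j0: "j0 \<in> {1..n}"
    and lt: "corner_sum A i0 j0 < corner_sum B i0 j0"
    using assms unfolding asm_le_def by force
  define h where "h d = block_cauchy_unscaled d i0 j0" for d
  define k where "k = nat (corner_sum B i0 j0 - corner_sum A i0 j0)"
  have h0_pos: "h 0 i j > 0" if "i \<in> {1..n}" "j \<in> {1..n}" for i j
    using that by (simp add: h_def block_cauchy_unscaled_0_pos)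
  have "((\<lambda>d. d ^ k * xmono n A (h d) - xmono n B (h d))
      \<longlongrightarrow> 0 ^ k * xmono n A (h 0) - xmono n B (h 0)) (at_right 0)"
    unfolding h_def using h0_pos[unfolded h_def]
    by (intro tendsto_intros tendsto_xmono tendsto_block_cauchy_unscaled xmono_dom_if_pos) auto
  moreover have "0 ^ k * xmono n A (h 0) - xmono n B (h 0) < 0"
  proof -
    have "k > 0"
      using lt by (simp add: k_def)
    moreover have "xmono n B (h 0) > 0"
      using h0_pos by (rule xmono_pos)
    ultimately show ?thesis
      by (simp add: zero_power)
  qed
  ultimately have small: "eventually (\<lambda>d. d ^ k * xmono n A (h d) - xmono n B (h d) < 0) (at_right 0)"
    by (rule order_tendstoD(2))
  have unit: "eventually (\<lambda>d. d \<in> {0<..<1}) (at_right (0::real))"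
    by (rule eventually_at_right_real) simp
  obtain d where d: "d ^ k * xmono n A (h d) < xmono n B (h d)" "0 < d" "d < 1"
    using eventually_happens'[OF trivial_limit_at_right_real eventually_conj[OF small unit]] by auto
  have "(1 / d) powi (corner_sum A i0 j0 - corner_sum B i0 j0) = d ^ k"
    using lt d(2) by (simp add: k_def power_int_def)
  then have "(1 / d) powi corner_sum A i0 j0 = (1 / d) powi corner_sum B i0 j0 * d ^ k"
    using d(2) power_int_add[of "1 / d" "corner_sum B i0 j0" "corner_sum A i0 j0 - corner_sum B i0 j0"] by simp
  then have "xmono n A (block_cauchy d i0 j0) = (1 / d) powi corner_sum B i0 j0 * (d ^ k * xmono n A (h d))"
    using d(2) i0 j0 by (simp add: xmono_block_cauchy h_def)
  also have "\<dots> < (1 / d) powi corner_sum B i0 j0 * xmono n B (h d)"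
    using d by (intro mult_strict_left_mono zero_less_power_int) auto
  also have "\<dots> = xmono n B (block_cauchy d i0 j0)"
    using d(2) i0 j0 by (simp add: xmono_block_cauchy h_def)
  finally show ?thesis
    using that block_cauchy_totally_positive d by blast
qed

lemma qTNN_imp_asm_le:
  assumes "qTNN n (\<lambda>M. xmono_dom n A M \<and> xmono_dom n B M) (\<lambda>M. xmono n A M - xmono n B M)"
  shows "asm_le n A B"
proof (rule ccontr)
  assume "\<not> asm_le n A B"
  then obtain N where pos: "\<And>rc. minor_idx n rc \<Longrightarrow> minor N rc > 0" and lt: "xmono n A N < xmono n B N"
    using not_asm_le_imp_witness by blast
  have N_eq: "qmat 1 N = N"
    by (simp add: qmat_def)
  have "TNN n N"
    using pos unfolding TNN_def by (simp add: less_imp_le)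
  moreover have "xmono_dom n C N" for C
    using pos[of "([_], [_])"] by (intro xmono_dom_if_pos) simp
  moreover have "TNN n (qmat 1 M) \<and> xmono_dom n A (qmat 1 M) \<and> xmono_dom n B (qmat 1 M)
      \<longrightarrow> 0 \<le> xmono n A (qmat 1 M) - xmono n B (qmat 1 M)" for M
    using assms unfolding qTNN_def locally_TNN_fun_def locally_TNN_mat_def by simp
  ultimately have "0 \<le> xmono n A N - xmono n B N"
    using N_eq by metis
  with lt show False by simp
qed

lemma qSFL_imp_asm_le:
  assumes "qSFL n (\<lambda>M. xmono_dom n A M \<and> xmono_dom n B M) (\<lambda>M. xmono n A M - xmono n B M)"
  shows "asm_le n A B"
proof (rule ccontr)
  assume "\<not> asm_le n A B"
  then obtain N where pos: "\<And>rc. minor_idx n rc \<Longrightarrow> minor N rc > 0" and lt: "xmono n A N < xmono n B N"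
    using not_asm_le_imp_witness by blast
  obtain Fs Gs where F_minors: "\<forall>(c, ms)\<in>set Fs. \<forall>rc\<in>set ms. minor_idx n rc"
    and G_minors: "\<forall>(rc, d)\<in>set Gs. minor_idx n rc"
    and identity: "\<forall>M. xmono_dom n A M \<and> xmono_dom n B M
      \<longrightarrow> (xmono n A M - xmono n B M) * eval_G Gs M = eval_F Fs M"
    using assms unfolding qSFL_def by blast
  have "xmono_dom n C N" for C
    using pos[of "([_], [_])"] by (intro xmono_dom_if_pos) simp
  then have "(xmono n A N - xmono n B N) * eval_G Gs N = eval_F Fs N"
    using identity by blast
  moreover have "eval_F Fs N \<ge> 0"
    using F_minors pos by (intro eval_F_nonneg) fastforce
  moreover have "eval_G Gs N > 0"
    using G_minors pos by (intro eval_G_pos) fastforce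
  ultimately show False
    using lt by (smt (verit) mult_neg_pos)
qed

theorem theorem5p2:
  fixes n :: nat and A B :: "nat \<Rightarrow> nat \<Rightarrow> int"
  assumes "is_ASM n A" and "is_ASM n B"
  defines "D \<equiv> (\<lambda>M. xmono_dom n A M \<and> xmono_dom n B M)"
      and "g \<equiv> (\<lambda>M. xmono n A M - xmono n B M)"
  shows "(asm_le n A B \<longleftrightarrow> qTNN n D g) \<and> (qTNN n D g \<longleftrightarrow> qSFL n D g)"
  unfolding D_def g_def
  using asm_le_imp_qTNN[OF assms(1,2)] qTNN_imp_asm_le asm_le_imp_qSFL[OF assms(1,2)] qSFL_imp_asm_le
  by blast

end
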